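(* Let $f:\mathbb{R}^n_{>0}\to\mathbb{R}^n_{>0}$ be order-preserving and homogeneous, and let $J\subset[n]$ be a nonempty proper subset such that $r(f^J_0)<\lambda(f^{[n]\setminus J}_\infty)$. If $f^J_0$ has a nonempty and $d_H$-bounded set of eigenvectors in $\mathbb{R}^J_{>0}$, then $r(f^I_0)<\lambda(f^{[n]\setminus I}_\infty)$ for all nonempty $I\subseteq J$. If $f^{[n]\setminus J}_\infty$ has a nonempty and $d_H$-bounded set of eigenvectors in the part $(0,\infty]^{[n]\setminus J}$, then $r(f^I_0)<\lambda(f^{[n]\setminus I}_\infty)$ for all $I\supseteq J$ with $I\ne[n]$.
   Context: $[n]=\{1,\dots,n\}$; $x\le y$ is the entrywise order. Order-preserving: $x\le y\Rightarrow f(x)\le f(y)$; homogeneous: $f(tx)=tf(x)$ for $t>0$. Every order-preserving homogeneous $f:\mathbb{R}^n_{>0}\to\mathbb{R}^n_{>0}$ extends continuously to order-preserving homogeneous maps $\mathbb{R}^n_{\ge0}\to\mathbb{R}^n_{\ge0}$ and $(0,\infty]^n\to(0,\infty]^n$, again denoted $f$. For $\alpha\in[-\infty,\infty]$ and $J\subseteq[n]$, $P^J_\alpha(x)_j=x_j$ for $j\in J$ and $=\alpha$ otherwise; $f^J_0=P^J_0fP^J_0$ on $\mathbb{R}^n_{\ge0}$ and $f^J_\infty=P^J_\infty fP^J_\infty$ on $(0,\infty]^n$. For $g$ order-preserving homogeneous on $\mathbb{R}^n_{\ge0}$ or $(0,\infty]^n$: $r(g)=\inf_{x\in\mathbb{R}^n_{>0}}\max_i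 g(x)_i/x_i$, $\lambda(g)=\sup_{x\in\mathbb{R}^n_{>0}}\min_i g(x)_i/x_i$ (values in $[0,\infty]$). $\mathbb{R}^J_{>0}=\{x\in\mathbb{R}^n_{\ge0}:\{i:x_i>0\}=J\}$ and $(0,\infty]^{K}=\{x\in(0,\infty]^n:\{i:x_i<\infty\}=K\}$. An eigenvector of $g$ in one of these sets $S$ is $x\in S$ with $g(x)=\mu x$ for some $\mu$. Hilbert's projective metric between two vectors $x,y$ in the same such set, with $L$ the set of coordinates where they are positive and finite, is $d_H(x,y)=\log\max_{i,j\in L}\frac{y_ix_j}{x_iy_j}$; $d_H$-bounded means finite $d_H$-diameter. *)

theory Defs
  imports "HOL-Analysis.Analysis" "HOL-Library.Extended_Real"
begin

definition pos_vec :: "('n \<Rightarrow> real) \<Rightarrow> bool" where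
  "pos_vec x \<longleftrightarrow> (\<forall>i. x i > 0)"

definition nonneg_vec :: "('n \<Rightarrow> real) \<Rightarrow> bool" where
  "nonneg_vec x \<longleftrightarrow> (\<forall>i. x i \<ge> 0)"

definition order_preserving_pos :: "(('n \<Rightarrow> real) \<Rightarrow> ('n \<Rightarrow> real)) \<Rightarrow> bool" where
  "order_preserving_pos f \<longleftrightarrow>
     (\<forall>x y. pos_vec x \<longrightarrow> pos_vec y \<longrightarrow> x \<le> y \<longrightarrow> f x \<le> f y)"

definition homogeneous_pos :: "(('n \<Rightarrow> real) \<Rightarrow> ('n \<Rightarrow> real)) \<Rightarrow> bool" where
  "homogeneous_pos f \<longleftrightarrow>
     (\<forall>x t. pos_vec x \<longrightarrow> t > 0 \<longrightarrow> f (\<lambda>i. t * x i) = (\<lambda>i. t * f x i))"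

text \<open>Continuous extension to the closed cone R^n_{\<ge>0}: f(x) = lim_{\<epsilon>\<down>0} f(x + \<epsilon>1)
  (the limit is a monotone infimum).\<close>
definition ext0 :: "(('n \<Rightarrow> real) \<Rightarrow> ('n \<Rightarrow> real)) \<Rightarrow> ('n \<Rightarrow> real) \<Rightarrow> ('n \<Rightarrow> real)" where
  "ext0 f x = (\<lambda>i. INF e\<in>{0<..}. f (\<lambda>j. x j + e) i)"

text \<open>Continuous extension to (0,\<infinity>]^n: f(x) = sup of f(y) over finite positive y \<le> x.\<close>
definition extinf :: "(('n \<Rightarrow> real) \<Rightarrow> ('n \<Rightarrow> real)) \<Rightarrow> ('n \<Rightarrow> ereal) \<Rightarrow> ('n \<Rightarrow> ereal)" where
  "extinf f x = (\<lambda>i. SUP y\<in>{y. pos_vec y \<and> (\<forall>j. ereal (y j) \<le> x j)}. ereal (f y i))"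

definition P0 :: "'n set \<Rightarrow> ('n \<Rightarrow> real) \<Rightarrow> ('n \<Rightarrow> real)" where
  "P0 J x = (\<lambda>i. if i \<in> J then x i else 0)"

definition Pinf :: "'n set \<Rightarrow> ('n \<Rightarrow> ereal) \<Rightarrow> ('n \<Rightarrow> ereal)" where
  "Pinf J x = (\<lambda>i. if i \<in> J then x i else \<infinity>)"

definition face0 :: "(('n \<Rightarrow> real) \<Rightarrow> ('n \<Rightarrow> real)) \<Rightarrow> 'n set \<Rightarrow> ('n \<Rightarrow> real) \<Rightarrow> ('n \<Rightarrow> real)" where
  "face0 f J = P0 J \<circ> ext0 f \<circ> P0 J"

definition faceinf :: "(('n \<Rightarrow> real) \<Rightarrow> ('n \<Rightarrow> real)) \<Rightarrow> 'n set \<Rightarrow> ('n \<Rightarrow> ereal) \<Rightarrow> ('n \<Rightarrow> ereal)" where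
  "faceinf f J = Pinf J \<circ> extinf f \<circ> Pinf J"

definition r0 :: "(('n::finite \<Rightarrow> real) \<Rightarrow> ('n \<Rightarrow> real)) \<Rightarrow> ereal" where
  "r0 g = (INF x\<in>{x. pos_vec x}. ereal (MAX i. g x i / x i))"

definition lambda0 :: "(('n::finite \<Rightarrow> real) \<Rightarrow> ('n \<Rightarrow> real)) \<Rightarrow> ereal" where
  "lambda0 g = (SUP x\<in>{x. pos_vec x}. ereal (MIN i. g x i / x i))"

definition rinf :: "(('n::finite \<Rightarrow> ereal) \<Rightarrow> ('n \<Rightarrow> ereal)) \<Rightarrow> ereal" where
  "rinf g = (INF x\<in>{x. pos_vec x}. (MAX i. g (\<lambda>j. ereal (x j)) i / ereal (x i)))"

definition lambdainf :: "(('n::finite \<Rightarrow> ereal) \<Rightarrow> ('n \<Rightarrow> ereal)) \<Rightarrow> ereal" where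
  "lambdainf g = (SUP x\<in>{x. pos_vec x}. (MIN i. g (\<lambda>j. ereal (x j)) i / ereal (x i)))"

definition part0 :: "'n set \<Rightarrow> ('n \<Rightarrow> real) set" where
  "part0 J = {x. nonneg_vec x \<and> {i. x i > 0} = J}"

definition partinf :: "'n set \<Rightarrow> ('n \<Rightarrow> ereal) set" where
  "partinf K = {x. (\<forall>i. x i > 0) \<and> {i. x i < \<infinity>} = K}"

definition eigvecs0 :: "(('n \<Rightarrow> real) \<Rightarrow> ('n \<Rightarrow> real)) \<Rightarrow> 'n set \<Rightarrow> ('n \<Rightarrow> real) set" where
  "eigvecs0 g J = {x \<in> part0 J. \<exists>\<mu>::real. g x = (\<lambda>i. \<mu> * x i)}"

definition eigvecsinf :: "(('n \<Rightarrow> ereal) \<Rightarrow> ('n \<Rightarrow> ereal)) \<Rightarrow> 'n set \<Rightarrow> ('n \<Rightarrow> ereal) set" where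
  "eigvecsinf g K = {x \<in> partinf K. \<exists>\<mu>::real. g x = (\<lambda>i. ereal \<mu> * x i)}"

definition hilbert :: "'n set \<Rightarrow> ('n \<Rightarrow> real) \<Rightarrow> ('n \<Rightarrow> real) \<Rightarrow> real" where
  "hilbert L x y = ln (Max {(y i * x j) / (x i * y j) | i j. i \<in> L \<and> j \<in> L})"

definition dH_bounded0 :: "'n set \<Rightarrow> ('n \<Rightarrow> real) set \<Rightarrow> bool" where
  "dH_bounded0 J E \<longleftrightarrow> (\<exists>C. \<forall>x\<in>E. \<forall>y\<in>E. hilbert J x y \<le> C)"

definition dH_boundedinf :: "'n set \<Rightarrow> ('n \<Rightarrow> ereal) set \<Rightarrow> bool" where
  "dH_boundedinf K E \<longleftrightarrow>
     (\<exists>C. \<forall>x\<in>E. \<forall>y\<in>E. hilbert K (\<lambda>i. real_of_ereal (x i)) (\<lambda>i. real_of_ereal (y i)) \<le> C)"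

end

theory Submission
  imports Defs
begin

text \<open>In logarithmic coordinates the restriction of a monotone homogeneous map to a face L is
  nonexpansive for the oscillation seminorm, which is Hilbert's projective metric. If its positive
  eigenvectors have bounded Hilbert diameter, the normalised log map displaces every point of a
  large sphere around an eigenvector by a definite amount, so by Brouwer's theorem the map tilted by
  1 + \<delta> on I and 1 - \<delta> off I still has a positive eigenvector w. For L = J this gives
  f^J_0 w = a w on I and f^J_0 w = b w on J - I with a < b; hence
  r(f^I_0) \<le> a \<le> r(f^J_0) < \<lambda>(f^{-J}_\<infinity>), and gluing a large multiple of w to a
  near-optimal vector for \<lambda>(f^{-J}_\<infinity>) shows \<lambda>(f^{-I}_\<infinity>) > a. The case I \<supseteq> J is
  dual, tilting f^{-J}_\<infinity> on L = - J instead.\<close>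

section \<open>The oscillation seminorm\<close>

text \<open>For positive x, y the number osc L (ln x - ln y) is Hilbert's projective metric on the face L.\<close>

definition osc :: "'n::finite set \<Rightarrow> real^'n \<Rightarrow> real" where
  "osc L x = Max ((\<lambda>(i, j). x$i - x$j) ` (L \<times> L))"

lemma osc_ge: "i \<in> L \<Longrightarrow> j \<in> L \<Longrightarrow> x$i - x$j \<le> osc L x"
  unfolding osc_def by (rule Max_ge) force+

lemma osc_le_iff: "L \<noteq> {} \<Longrightarrow> osc L x \<le> R \<longleftrightarrow> (\<forall>i\<in>L. \<forall>j\<in>L. x$i - x$j \<le> R)"
  unfolding osc_def by (subst Max_le_iff) auto

lemma osc_leI: "L \<noteq> {} \<Longrightarrow> (\<And>i j. i \<in> L \<Longrightarrow> j \<in> L \<Longrightarrow> x$i - x$j \<le> R) \<Longrightarrow> osc L x \<le> R"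
  using osc_le_iff by blast

lemma osc_nonneg: "L \<noteq> {} \<Longrightarrow> 0 \<le> osc L x"
  using osc_ge[of _ L _ x] by fastforce

lemma osc_triangle: "L \<noteq> {} \<Longrightarrow> osc L (x + y) \<le> osc L x + osc L y"
  by (rule osc_leI) (use osc_ge[of _ L _ x] osc_ge[of _ L _ y] in fastforce)+

lemma osc_scaleR:
  assumes "L \<noteq> {}" and c: "0 \<le> c"
  shows "osc L (c *\<^sub>R x) = c * osc L x"
proof -
  have "mono ((*) c)" using c by (simp add: mono_def mult_left_mono)
  hence "c * osc L x = Max ((*) c ` (\<lambda>(i, j). x$i - x$j) ` (L \<times> L))"
    unfolding osc_def using assms(1) by (intro mono_Max_commute) auto
  also have "\<dots> = osc L (c *\<^sub>R x)"
    unfolding osc_def image_image by (intro arg_cong[where f = Max] image_cong) (auto simp: algebra_simps)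
  finally show ?thesis by simp
qed

lemma osc_uminus: "osc L (- x) = osc L x"
proof (cases "L = {}")
  case False
  have "osc L (- y) \<le> osc L y" for y
    by (rule osc_leI[OF False]) (use osc_ge[of _ L _ y] in fastforce)
  from this[of x] this[of "- x"] show ?thesis by simp
qed (simp add: osc_def)

lemma osc_lipschitz: "2-lipschitz_on S (osc L)"
proof (cases "L = {}")
  case False
  have bound: "osc L x \<le> osc L y + 2 * dist x y" for x y
  proof (rule osc_leI[OF False])
    fix i j assume ij: "i \<in> L" "j \<in> L"
    have "\<bar>(x - y)$i\<bar> \<le> dist x y" "\<bar>(x - y)$j\<bar> \<le> dist x y"
      unfolding dist_norm by (rule component_le_norm_cart)+
    with osc_ge[OF ij, of y] show "x$i - x$j \<le> osc L y + 2 * dist x y" by simp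
  qed
  show ?thesis
  proof (rule lipschitz_onI)
    fix x y show "dist (osc L x) (osc L y) \<le> 2 * dist x y"
      using bound[of x y] bound[of y x] by (simp add: dist_real_def dist_commute abs_le_iff)
  qed simp
qed (simp add: osc_def lipschitz_on_def)

lemma continuous_on_osc [continuous_intros]:
  "continuous_on S F \<Longrightarrow> continuous_on S (\<lambda>x. osc L (F x))"
  by (rule continuous_on_compose2[OF lipschitz_on_continuous_on[OF osc_lipschitz]]) auto

section \<open>Monotone homogeneous maps on a face\<close>

lemma ln_ratio_le_hilbert:
  fixes x y :: "'n::finite \<Rightarrow> real"
  assumes "pos_vec x" "pos_vec y" "i \<in> L" "j \<in> L"
  shows "ln ((y i * x j) / (x i * y j)) \<le> hilbert L x y"
proof -
  let ?S = "{(y i * x j) / (x i * y j) | i j. i \<in> L \<and> j \<in> L}"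
  have "?S = (\<lambda>(i, j). (y i * x j) / (x i * y j)) ` (L \<times> L)" by auto
  hence "(y i * x j) / (x i * y j) \<le> Max ?S" using assms(3,4) by (intro Max_ge) auto
  moreover have "0 < (y i * x j) / (x i * y j)" using assms(1,2) by (simp add: pos_vec_def)
  ultimately show ?thesis unfolding hilbert_def by simp
qed

lemma hilbert_cong:
  assumes "\<forall>i\<in>L. x i = x' i" "\<forall>i\<in>L. y i = y' i"
  shows "hilbert L x y = hilbert L x' y'"
proof -
  have "{(y i * x j) / (x i * y j) | i j. i \<in> L \<and> j \<in> L} =
        {(y' i * x' j) / (x' i * y' j) | i j. i \<in> L \<and> j \<in> L}"
    using assms by (metis (no_types, lifting))
  thus ?thesis by (simp add: hilbert_def)
qed

lemma pos_vec_scale: "pos_vec x \<Longrightarrow> 0 < t \<Longrightarrow> pos_vec (\<lambda>j. t * x j)"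
  by (simp add: pos_vec_def)

lemma pos_vec_dominated:
  fixes x v :: "'n::finite \<Rightarrow> real"
  assumes "pos_vec x" "pos_vec v"
  obtains c where "0 < c" "\<And>k. x k \<le> c * v k"
proof
  let ?c = "Max (range (\<lambda>k. x k / v k))"
  show "x k \<le> ?c * v k" for k
  proof -
    have "x k / v k \<le> ?c" by (rule Max_ge) auto
    moreover have "0 < v k" using assms(2) by (simp add: pos_vec_def)
    ultimately show ?thesis using pos_divide_le_eq by blast
  qed
  have "?c \<in> range (\<lambda>k. x k / v k)" by (rule Max_in) auto
  then obtain k where "?c = x k / v k" by blast
  thus "0 < ?c" using assms by (simp add: pos_vec_def)
qed

lemma pos_vec_dominates:
  fixes x v :: "'n::finite \<Rightarrow> real"
  assumes "pos_vec x" "pos_vec v"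
  obtains c where "0 < c" "\<And>k. c * v k \<le> x k"
proof
  let ?c = "Min (range (\<lambda>k. x k / v k))"
  show "?c * v k \<le> x k" for k
  proof -
    have "?c \<le> x k / v k" by (rule Min_le) auto
    moreover have "0 < v k" using assms(2) by (simp add: pos_vec_def)
    ultimately show ?thesis by (simp add: pos_le_divide_eq)
  qed
  have "?c \<in> range (\<lambda>k. x k / v k)" by (rule Min_in) auto
  then obtain k where "?c = x k / v k" by blast
  thus "0 < ?c" using assms by (simp add: pos_vec_def)
qed

locale monotone_homogeneous_on =
  fixes h :: "('n::finite \<Rightarrow> real) \<Rightarrow> 'n \<Rightarrow> real" and L :: "'n set"
  assumes nonempty: "L \<noteq> {}"
    and mono: "\<And>x y i. pos_vec x \<Longrightarrow> pos_vec y \<Longrightarrow> \<forall>k\<in>L. x k \<le> y k \<Longrightarrow> i \<in> L \<Longrightarrow> h x i \<le> h y i"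
    and homogeneous: "\<And>x t i. pos_vec x \<Longrightarrow> 0 < t \<Longrightarrow> i \<in> L \<Longrightarrow> h (\<lambda>j. t * x j) i = t * h x i"
    and nonneg: "\<And>x i. pos_vec x \<Longrightarrow> i \<in> L \<Longrightarrow> 0 \<le> h x i"
begin

lemma cong: "pos_vec x \<Longrightarrow> pos_vec y \<Longrightarrow> \<forall>k\<in>L. x k = y k \<Longrightarrow> i \<in> L \<Longrightarrow> h x i = h y i"
  using mono[of x y i] mono[of y x i] by fastforce

lemma le_scaled:
  assumes "pos_vec x" "pos_vec v"
  obtains c where "0 < c" "\<And>i. i \<in> L \<Longrightarrow> h x i \<le> c * h v i"
proof -
  obtain c where c: "0 < c" "\<And>k. x k \<le> c * v k" using pos_vec_dominated[OF assms] by blast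
  have "h x i \<le> c * h v i" if "i \<in> L" for i
    using mono[OF assms(1) pos_vec_scale[OF assms(2) c(1)] _ that] c(2)
      homogeneous[OF assms(2) c(1) that] by simp
  with c(1) that show ?thesis by blast
qed

lemma ge_scaled:
  assumes "pos_vec x" "pos_vec v"
  obtains c where "0 < c" "\<And>i. i \<in> L \<Longrightarrow> c * h v i \<le> h x i"
proof -
  obtain c where c: "0 < c" "\<And>k. c * v k \<le> x k" using pos_vec_dominates[OF assms] by blast
  have "c * h v i \<le> h x i" if "i \<in> L" for i
    using mono[OF pos_vec_scale[OF assms(2) c(1)] assms(1) _ that] c(2)
      homogeneous[OF assms(2) c(1) that] by simp
  with c(1) that show ?thesis by blast
qed

lemma subeigenvector_ratio:
  assumes w: "pos_vec w" and sub: "\<forall>i\<in>L. a * w i \<le> h w i" and x: "pos_vec x"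
  shows "\<exists>j\<in>L. a * x j \<le> h x j"
proof -
  define c where "c = Min ((\<lambda>k. x k / w k) ` L)"
  have "c \<in> (\<lambda>k. x k / w k) ` L" unfolding c_def using nonempty by (intro Min_in) auto
  then obtain j where j: "j \<in> L" "c = x j / w j" by blast
  have c_pos: "0 < c" using j x w by (simp add: pos_vec_def)
  have "c * w k \<le> x k" if "k \<in> L" for k
  proof -
    have "c \<le> x k / w k" unfolding c_def using that by (intro Min_le) auto
    thus ?thesis using w by (simp add: pos_vec_def pos_le_divide_eq)
  qed
  hence "h (\<lambda>k. c * w k) j \<le> h x j" by (intro mono pos_vec_scale w c_pos x j(1)) auto
  moreover have "x j = c * w j" using j w by (simp add: pos_vec_def less_imp_neq[symmetric])
  moreover have "c * (a * w j) \<le> c * h w j" using sub j(1) c_pos by simp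
  ultimately have "a * x j \<le> h x j"
    using homogeneous[OF w c_pos j(1)] by (simp add: mult.left_commute)
  thus ?thesis using j(1) by blast
qed

lemma supereigenvector_ratio:
  assumes w: "pos_vec w" and super: "\<forall>i\<in>L. h w i \<le> b * w i" and x: "pos_vec x"
  shows "\<exists>j\<in>L. h x j \<le> b * x j"
proof -
  define c where "c = Max ((\<lambda>k. x k / w k) ` L)"
  have "c \<in> (\<lambda>k. x k / w k) ` L" unfolding c_def using nonempty by (intro Max_in) auto
  then obtain j where j: "j \<in> L" "c = x j / w j" by blast
  have c_pos: "0 < c" using j x w by (simp add: pos_vec_def)
  have "x k \<le> c * w k" if "k \<in> L" for k
  proof -
    have "x k / w k \<le> c" unfolding c_def using that by (intro Max_ge) auto
    thus ?thesis using w by (simp add: pos_vec_def pos_divide_le_eq)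
  qed
  hence "h x j \<le> h (\<lambda>k. c * w k) j" by (intro mono pos_vec_scale w c_pos x j(1)) auto
  moreover have "x j = c * w j" using j w by (simp add: pos_vec_def less_imp_neq[symmetric])
  moreover have "c * h w j \<le> c * (b * w j)" using super j(1) c_pos by simp
  ultimately have "h x j \<le> b * x j"
    using homogeneous[OF w c_pos j(1)] by (simp add: mult.left_commute)
  thus ?thesis using j(1) by blast
qed

end

locale bounded_eigenvectors = monotone_homogeneous_on +
  fixes v :: "'n::finite \<Rightarrow> real" and \<mu> C :: real
  assumes eigenvector_pos: "pos_vec v"
    and eigenvector: "\<And>i. i \<in> L \<Longrightarrow> h v i = \<mu> * v i"
    and hilbert_bounded: "\<And>x y \<nu>x \<nu>y. pos_vec x \<Longrightarrow> pos_vec y \<Longrightarrow> \<forall>i\<in>L. h x i = \<nu>x * x i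
      \<Longrightarrow> \<forall>i\<in>L. h y i = \<nu>y * y i \<Longrightarrow> hilbert L x y \<le> C"
begin

lemma eigenvalue_pos:
  assumes ik: "i \<in> L" "k \<in> L" "i \<noteq> k"
  shows "0 < \<mu>"
proof (rule ccontr)
  assume "\<not> 0 < \<mu>"
  moreover have "0 \<le> \<mu> * v k" using nonneg[OF eigenvector_pos ik(2)] eigenvector[OF ik(2)] by simp
  moreover have "0 < v k" using eigenvector_pos by (simp add: pos_vec_def)
  ultimately have "\<mu> = 0" by (simp add: zero_le_mult_iff)
  have vanishes: "h x j = 0" if x: "pos_vec x" and j: "j \<in> L" for x j
  proof -
    obtain c where "0 < c" "\<And>i. i \<in> L \<Longrightarrow> h x i \<le> c * h v i" using le_scaled[OF x eigenvector_pos] by blast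
    thus ?thesis using nonneg[OF x j] eigenvector[OF j] \<open>\<mu> = 0\<close> j by fastforce
  qed
  \<comment> \<open>then every positive vector is an eigenvector, and these have unbounded Hilbert diameter\<close>
  define x where "x l = (if l = i then exp (C + 1) else 1)" for l
  have x: "pos_vec x" and one: "pos_vec (\<lambda>_. 1)" by (auto simp: x_def pos_vec_def)
  have "hilbert L x (\<lambda>_. 1) \<le> C"
    by (rule hilbert_bounded[OF x one, of 0 0]) (auto simp: vanishes x one)
  moreover have "ln ((1 * x i) / (x k * 1)) \<le> hilbert L x (\<lambda>_. 1)"
    by (rule ln_ratio_le_hilbert[OF x one ik(2,1)])
  ultimately show False using ik(3) by (simp add: x_def)
qed

end

section \<open>Tilted eigenvectors via Brouwer's fixed point theorem\<close>

definition expv :: "real^'n \<Rightarrow> 'n \<Rightarrow> real" where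
  "expv u = (\<lambda>i. exp (u$i))"

definition tilt :: "real \<Rightarrow> 'n set \<Rightarrow> 'n \<Rightarrow> real" where
  "tilt \<delta> I i = (if i \<in> I then 1 + \<delta> else 1 - \<delta>)"

lemma pos_vec_expv: "pos_vec (expv u)"
  by (simp add: expv_def pos_vec_def)

lemma ln_one_plus_minus_ln_one_minus_le:
  fixes d :: real
  assumes "0 \<le> d" "d \<le> 1/2"
  shows "ln (1 + d) - ln (1 - d) \<le> 3 * d"
proof -
  have "ln (1 + d) \<le> d" using assms by (intro ln_add_one_self_le_self)
  moreover have "ln (1 / (1 - d)) \<le> 1 / (1 - d) - 1" using assms by (intro ln_le_minus_one) simp
  moreover have "1 / (1 - d) - 1 \<le> 2 * d" using assms by (simp add: field_simps mult_left_le)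
  ultimately show ?thesis using assms by (simp add: ln_div)
qed

locale positive_bounded_eigenvectors = bounded_eigenvectors h L v \<mu> C
  for h :: "('n::finite \<Rightarrow> real) \<Rightarrow> 'n \<Rightarrow> real" and L v \<mu> C +
  assumes eigenvalue_positive: "0 < \<mu>"
begin

lemma positive: "pos_vec x \<Longrightarrow> i \<in> L \<Longrightarrow> 0 < h x i"
proof -
  assume x: "pos_vec x" and i: "i \<in> L"
  obtain c where "0 < c" "c * h v i \<le> h x i" using ge_scaled[OF x eigenvector_pos] i by blast
  moreover have "0 < h v i" using eigenvector[OF i] eigenvalue_positive eigenvector_pos
    by (simp add: pos_vec_def)
  ultimately show ?thesis by (meson mult_pos_pos order_less_le_trans)
qed

definition base :: 'n where
  "base = (SOME j. j \<in> L)"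

lemma base_in: "base \<in> L"
  unfolding base_def using nonempty by (simp add: some_in_eq)

text \<open>Log coordinates modulo scaling; fixing the base coordinate makes osc-balls compact.\<close>

definition normalized :: "(real^'n) set" where
  "normalized = {u. u$base = 0 \<and> (\<forall>i. i \<notin> L \<longrightarrow> u$i = 0)}"

definition normal_log :: "('n \<Rightarrow> real) \<Rightarrow> real^'n" where
  "normal_log x = (\<chi> i. if i \<in> L then ln (x i) - ln (x base) else 0)"

definition log_map :: "real^'n \<Rightarrow> real^'n" where
  "log_map u = normal_log (h (expv u))"

lemma normal_log_normalized: "normal_log x \<in> normalized"
  by (simp add: normal_log_def normalized_def base_in)

lemma normal_log_mult:
  assumes "\<forall>i\<in>L. 0 < x i" "\<forall>i\<in>L. 0 < y i"
  shows "normal_log (\<lambda>i. x i * y i) = normal_log x + normal_log y"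
proof -
  have "ln (x i * y i) = ln (x i) + ln (y i)" if "i \<in> L" for i
    using assms[rule_format, OF that] by (simp add: ln_mult)
  thus ?thesis using base_in by (simp add: normal_log_def vec_eq_iff)
qed

lemma normal_log_scaled:
  assumes "0 < c" "\<forall>i\<in>L. 0 < y i" "\<forall>i\<in>L. x i = c * y i"
  shows "normal_log x = normal_log y"
proof -
  have "ln (x i) = ln c + ln (y i)" if "i \<in> L" for i
    using assms(1) assms(2,3)[rule_format, OF that] by (simp add: ln_mult)
  thus ?thesis using base_in by (simp add: normal_log_def vec_eq_iff)
qed

lemma eigenvector_of_normal_log:
  assumes u: "u \<in> normalized" and x: "\<forall>i\<in>L. 0 < x i" and eq: "normal_log x = u" and i: "i \<in> L"
  shows "x i = x base * expv u i"
proof -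
  have pos: "0 < x i" "0 < x base" using x i base_in by auto
  have "u$i = ln (x i) - ln (x base)" using eq[symmetric] i by (simp add: normal_log_def)
  hence "expv u i = x i / x base" using pos by (simp add: expv_def exp_diff)
  thus ?thesis using pos by simp
qed

lemma log_map_fixes_centre: "log_map (normal_log v) = normal_log v"
proof -
  have v: "\<forall>i\<in>L. 0 < v i" and vb: "0 < v base" using eigenvector_pos by (auto simp: pos_vec_def)
  have scaled_v: "pos_vec (\<lambda>j. (1 / v base) * v j)" by (intro pos_vec_scale eigenvector_pos) (simp add: vb)
  have "\<forall>i\<in>L. h (expv (normal_log v)) i = (\<mu> / v base) * v i"
  proof
    fix i assume i: "i \<in> L"
    have "h (expv (normal_log v)) i = h (\<lambda>j. (1 / v base) * v j) i"
      using v vb i by (intro cong pos_vec_expv scaled_v) (auto simp: expv_def normal_log_def exp_diff)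
    also have "\<dots> = (1 / v base) * h v i" using vb by (intro homogeneous[OF eigenvector_pos _ i]) simp
    finally show "h (expv (normal_log v)) i = (\<mu> / v base) * v i" using eigenvector[OF i] by simp
  qed
  moreover have "0 < \<mu> / v base" using eigenvalue_positive vb by simp
  ultimately show ?thesis unfolding log_map_def using v by (intro normal_log_scaled) auto
qed

lemma ln_h_expv_shift:
  assumes "\<forall>k\<in>L. u'$k \<le> u$k + c" "i \<in> L"
  shows "ln (h (expv u') i) \<le> ln (h (expv u) i) + c"
proof -
  have "h (expv u') i \<le> h (\<lambda>j. exp c * expv u j) i"
    using assms by (intro mono pos_vec_expv pos_vec_scale) (auto simp: expv_def mult.commute simp flip: exp_add)
  also have "\<dots> = exp c * h (expv u) i" using homogeneous[OF pos_vec_expv _ assms(2)] by simp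
  finally show ?thesis
    using positive[OF pos_vec_expv assms(2), of u'] positive[OF pos_vec_expv assms(2), of u]
    by (simp add: ln_mult ln_le_cancel_iff[symmetric] del: ln_le_cancel_iff)
qed

lemma ln_h_expv_lipschitz: "i \<in> L \<Longrightarrow> \<bar>ln (h (expv u) i) - ln (h (expv u') i)\<bar> \<le> dist u u'"
proof -
  assume i: "i \<in> L"
  have "u$k \<le> u'$k + dist u u' \<and> u'$k \<le> u$k + dist u u'" for k
    using component_le_norm_cart[of "u - u'" k] by (auto simp: dist_norm abs_le_iff)
  hence "\<forall>k\<in>L. u$k \<le> u'$k + dist u u'" "\<forall>k\<in>L. u'$k \<le> u$k + dist u u'" by auto
  from ln_h_expv_shift[OF this(1) i] ln_h_expv_shift[OF this(2) i] show ?thesis by simp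
qed

lemma continuous_on_log_map: "continuous_on S log_map"
proof -
  have "(2 * real CARD('n))-lipschitz_on S log_map"
  proof (rule lipschitz_onI)
    fix u u' :: "real^'n"
    have comp: "\<bar>(log_map u - log_map u')$i\<bar> \<le> 2 * dist u u'" for i
      using ln_h_expv_lipschitz[OF base_in, of u u'] ln_h_expv_lipschitz[of i u u']
      by (auto simp: log_map_def normal_log_def)
    have "dist (log_map u) (log_map u') \<le> (\<Sum>i\<in>UNIV. \<bar>(log_map u - log_map u')$i\<bar>)"
      unfolding dist_norm by (rule norm_le_l1_cart)
    also have "\<dots> \<le> real CARD('n) * (2 * dist u u')"
      using sum_bounded_above[of UNIV _ "2 * dist u u'", OF comp] by simp
    finally show "dist (log_map u) (log_map u') \<le> 2 * real CARD('n) * dist u u'" by simp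
  qed simp
  thus ?thesis by (rule lipschitz_on_continuous_on)
qed

lemma log_map_nonexpansive: "osc L (log_map u - log_map u') \<le> osc L (u - u')"
proof (rule osc_leI[OF nonempty])
  fix i j assume ij: "i \<in> L" "j \<in> L"
  define d where "d = u - u'"
  obtain p where p: "p \<in> L" "\<forall>k\<in>L. d$k \<le> d$p"
    using Max_in[of "(\<lambda>k. d$k) ` L"] Max_ge[of "(\<lambda>k. d$k) ` L"] nonempty by fastforce
  obtain q where q: "q \<in> L" "\<forall>k\<in>L. d$q \<le> d$k"
    using Min_in[of "(\<lambda>k. d$k) ` L"] Min_le[of "(\<lambda>k. d$k) ` L"] nonempty by fastforce
  have "ln (h (expv u) i) \<le> ln (h (expv u') i) + d$p"
    using p(2) ij(1) by (intro ln_h_expv_shift) (auto simp: d_def)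
  moreover have "ln (h (expv u') j) \<le> ln (h (expv u) j) + - d$q"
    using q(2) ij(2) by (intro ln_h_expv_shift) (auto simp: d_def)
  moreover have "d$p - d$q \<le> osc L d" by (rule osc_ge[OF p(1) q(1)])
  ultimately show "(log_map u - log_map u')$i - (log_map u - log_map u')$j \<le> osc L (u - u')"
    using ij by (simp add: log_map_def normal_log_def d_def)
qed

lemma normalized_eq_if_osc_le_0:
  assumes "u \<in> normalized" "w \<in> normalized" "osc L (w - u) \<le> 0"
  shows "w = u"
proof -
  have "w$i = u$i" for i
  proof (cases "i \<in> L")
    case True
    have "(w - u)$i - (w - u)$base \<le> 0" "(w - u)$base - (w - u)$i \<le> 0"
      using osc_ge[OF True base_in, of "w - u"] osc_ge[OF base_in True, of "w - u"] assms(3) by auto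
    thus ?thesis using assms(1,2) by (simp add: normalized_def)
  qed (use assms(1,2) in \<open>simp add: normalized_def\<close>)
  thus ?thesis by (simp add: vec_eq_iff)
qed

lemma fixed_point_near_centre:
  assumes u: "u \<in> normalized" and fixed: "log_map u = u"
  shows "osc L (u - normal_log v) \<le> C"
proof (rule osc_leI[OF nonempty])
  fix i j assume ij: "i \<in> L" "j \<in> L"
  have "\<forall>k\<in>L. h (expv u) k = h (expv u) base * expv u k"
    using eigenvector_of_normal_log[OF u _ fixed[unfolded log_map_def]] positive[OF pos_vec_expv] by blast
  hence "hilbert L (expv u) v \<le> C"
    using eigenvector by (intro hilbert_bounded[OF pos_vec_expv eigenvector_pos]) auto
  moreover have "ln ((v j * expv u i) / (expv u j * v i)) \<le> hilbert L (expv u) v"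
    by (rule ln_ratio_le_hilbert[OF pos_vec_expv eigenvector_pos ij(2,1)])
  moreover have "ln ((v j * expv u i) / (expv u j * v i)) = (u - normal_log v)$i - (u - normal_log v)$j"
  proof -
    have "0 < v i" "0 < v j" using eigenvector_pos by (auto simp: pos_vec_def)
    thus ?thesis using ij by (simp add: expv_def normal_log_def ln_mult ln_div)
  qed
  ultimately show "(u - normal_log v)$i - (u - normal_log v)$j \<le> C" by simp
qed

lemma osc_normal_log_tilt:
  assumes "0 \<le> \<delta>" "\<delta> < 1"
  shows "osc L (normal_log (tilt \<delta> I)) \<le> ln (1 + \<delta>) - ln (1 - \<delta>)"
proof (rule osc_leI[OF nonempty])
  fix i j assume "i \<in> L" "j \<in> L"
  moreover have "ln (1 - \<delta>) \<le> ln (1 + \<delta>)" using assms by simp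
  ultimately show "normal_log (tilt \<delta> I)$i - normal_log (tilt \<delta> I)$j \<le> ln (1 + \<delta>) - ln (1 - \<delta>)"
    by (auto simp: normal_log_def tilt_def)
qed

definition osc_ball :: "real \<Rightarrow> (real^'n) set" where
  "osc_ball R = {u \<in> normalized. osc L (u - normal_log v) \<le> R}"

lemma compact_osc_ball: "compact (osc_ball R)"
proof -
  have "closed (osc_ball R)"
    unfolding osc_ball_def normalized_def mem_Collect_eq
    by (intro closed_Collect_conj closed_Collect_all closed_Collect_imp closed_Collect_eq closed_Collect_le)
       (auto intro!: continuous_intros)
  moreover have "norm u \<le> (\<Sum>i\<in>UNIV. \<bar>R\<bar> + \<bar>normal_log v $ i\<bar>)" if u: "u \<in> osc_ball R" for u
  proof -
    have "\<bar>u$i\<bar> \<le> \<bar>R\<bar> + \<bar>normal_log v $ i\<bar>" for i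
    proof (cases "i \<in> L")
      case True
      have "(u - normal_log v)$i - (u - normal_log v)$base \<le> R"
        "(u - normal_log v)$base - (u - normal_log v)$i \<le> R"
        using osc_ge[OF True base_in, of "u - normal_log v"] osc_ge[OF base_in True, of "u - normal_log v"] u
        by (auto simp: osc_ball_def)
      moreover have "u$base = 0" "normal_log v $ base = 0"
        using u normal_log_normalized by (auto simp: osc_ball_def normalized_def)
      ultimately show ?thesis by simp
    qed (use u in \<open>simp add: osc_ball_def normalized_def\<close>)
    hence "(\<Sum>i\<in>UNIV. \<bar>u$i\<bar>) \<le> (\<Sum>i\<in>UNIV. \<bar>R\<bar> + \<bar>normal_log v $ i\<bar>)" by (intro sum_mono)
    thus ?thesis using norm_le_l1_cart[of u] by linarith
  qed
  hence "bounded (osc_ball R)" unfolding bounded_iff by blast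
  ultimately show ?thesis by (simp add: compact_eq_bounded_closed)
qed

lemma convex_osc_ball: "convex (osc_ball R)"
proof (rule convexI)
  fix x y and a b :: real
  assume xy: "x \<in> osc_ball R" "y \<in> osc_ball R" and ab: "0 \<le> a" "0 \<le> b" "a + b = 1"
  have "a *\<^sub>R x + b *\<^sub>R y - normal_log v = a *\<^sub>R (x - normal_log v) + b *\<^sub>R (y - normal_log v)"
    using ab by (simp add: algebra_simps flip: scaleR_add_left)
  hence "osc L (a *\<^sub>R x + b *\<^sub>R y - normal_log v) \<le> a * osc L (x - normal_log v) + b * osc L (y - normal_log v)"
    using osc_triangle[OF nonempty] osc_scaleR[OF nonempty] ab by metis
  also have "\<dots> \<le> a * R + b * R"
    using xy ab by (intro add_mono mult_left_mono) (auto simp: osc_ball_def)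
  also have "\<dots> = R" using ab by (simp flip: distrib_right)
  finally show "a *\<^sub>R x + b *\<^sub>R y \<in> osc_ball R"
    using xy by (simp add: osc_ball_def normalized_def)
qed

text \<open>A Leray--Schauder type alternative, obtained from Brouwer's theorem by composing with the
  radial retraction onto the ball of radius R around the log of the eigenvector.\<close>

lemma fixed_point_or_escape:
  assumes R: "0 < R" and F: "continuous_on UNIV F" "\<And>u. F u \<in> normalized"
  obtains u where "u \<in> normalized" "F u = u"
  | u where "u \<in> normalized" "osc L (u - normal_log v) = R"
      "osc L (F u - u) + R = osc L (F u - normal_log v)"
proof -
  let ?c = "normal_log v"
  define P where "P w = ?c + (R / max R (osc L (w - ?c))) *\<^sub>R (w - ?c)" for w
  have P_ball: "P w \<in> osc_ball R" if "w \<in> normalized" for w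
  proof -
    define s where "s = R / max R (osc L (w - ?c))"
    have s: "0 < s" "s * osc L (w - ?c) \<le> R"
      using R osc_nonneg[OF nonempty, of "w - ?c"] by (auto simp: s_def field_simps)
    have "osc L (P w - ?c) = s * osc L (w - ?c)"
      using osc_scaleR[OF nonempty, of s "w - ?c"] s by (simp add: P_def s_def)
    thus ?thesis using s that normal_log_normalized[of v]
      by (simp add: osc_ball_def P_def normalized_def s_def)
  qed
  have "continuous_on (osc_ball R) (\<lambda>u. P (F u))" unfolding P_def
    using R by (intro continuous_intros continuous_on_subset[OF F(1)]) auto
  moreover have "?c \<in> osc_ball R"
    using R normal_log_normalized[of v] by (simp add: osc_ball_def osc_leI[OF nonempty])
  ultimately obtain u where u: "u \<in> osc_ball R" "P (F u) = u"
    using brouwer[OF compact_osc_ball convex_osc_ball, where f = "\<lambda>u. P (F u)"] P_ball F(2) by blast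
  hence u_norm: "u \<in> normalized" by (simp add: osc_ball_def)
  define \<omega> where "\<omega> = osc L (F u - ?c)"
  show ?thesis
  proof (cases "\<omega> \<le> R")
    case True
    hence "P (F u) = F u" by (simp add: P_def \<omega>_def max_def R(1)[THEN less_imp_neq, symmetric])
    with u u_norm that(1) show ?thesis by simp
  next
    case False
    define s where "s = R / \<omega>"
    have s: "0 < s" "s < 1" "s * \<omega> = R" using False R by (auto simp: s_def)
    have u_c: "u - ?c = s *\<^sub>R (F u - ?c)" using u(2) False
      by (simp add: P_def s_def \<omega>_def max_def) (metis add_diff_cancel_left')
    hence Fu_u: "F u - u = (1 - s) *\<^sub>R (F u - ?c)" by (simp add: algebra_simps)
    have "0 \<le> 1 - s" using s(2) by simp
    have "osc L (u - ?c) = R"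
      unfolding u_c osc_scaleR[OF nonempty less_imp_le[OF s(1)]] using s(3) by (simp add: \<omega>_def)
    moreover have "osc L (F u - u) = \<omega> - R"
      unfolding Fu_u osc_scaleR[OF nonempty \<open>0 \<le> 1 - s\<close>] using s(3) by (simp add: \<omega>_def algebra_simps)
    ultimately show ?thesis using u_norm that(2) by (simp add: \<omega>_def)
  qed
qed

lemma displacement_bounded_below:
  assumes "C < R"
  obtains m where "0 < m"
    "\<And>u. u \<in> normalized \<Longrightarrow> osc L (u - normal_log v) = R \<Longrightarrow> m \<le> osc L (log_map u - u)"
proof -
  define S where "S = {u \<in> normalized. osc L (u - normal_log v) = R}"
  have "compact S"
  proof -
    have "S = osc_ball R \<inter> {u. osc L (u - normal_log v) = R}" by (auto simp: S_def osc_ball_def)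
    thus ?thesis by (auto intro!: compact_Int_closed compact_osc_ball closed_Collect_eq continuous_intros)
  qed
  have displaced: "0 < osc L (log_map u - u)" if "u \<in> S" for u
  proof (rule ccontr)
    assume "\<not> 0 < osc L (log_map u - u)"
    hence "log_map u = u"
      using that normal_log_normalized by (intro normalized_eq_if_osc_le_0) (auto simp: S_def log_map_def)
    thus False using fixed_point_near_centre[of u] that assms by (simp add: S_def)
  qed
  show ?thesis
  proof (cases "S = {}")
    case False
    have "continuous_on S (\<lambda>u. osc L (log_map u - u))" by (intro continuous_intros continuous_on_log_map)
    from continuous_attains_inf[OF \<open>compact S\<close> False this] obtain u where
      "u \<in> S" "\<forall>u'\<in>S. osc L (log_map u - u) \<le> osc L (log_map u' - u')" by blast
    thus ?thesis using that[of "osc L (log_map u - u)"] displaced by (auto simp: S_def)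
  qed (use that[of 1] S_def in auto)
qed

lemma perturbed_eigenvector:
  obtains \<delta> w \<nu> where "0 < \<delta>" "\<delta> < 1" "pos_vec w" "\<And>i. i \<in> L \<Longrightarrow> tilt \<delta> I i * h w i = \<nu> * w i"
proof -
  define R where "R = max C 0 + 1"
  have R: "0 < R" "C < R" by (auto simp: R_def)
  obtain m where m: "0 < m"
    "\<And>u. u \<in> normalized \<Longrightarrow> osc L (u - normal_log v) = R \<Longrightarrow> m \<le> osc L (log_map u - u)"
    using displacement_bounded_below[OF R(2)] by blast
  define \<delta> where "\<delta> = min (1/2) (m / 7)"
  have \<delta>: "0 < \<delta>" "\<delta> \<le> 1/2" "\<delta> < 1" using m(1) by (auto simp: \<delta>_def)
  define \<epsilon> where "\<epsilon> = ln (1 + \<delta>) - ln (1 - \<delta>)"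
  have "2 * \<epsilon> < m"
    using ln_one_plus_minus_ln_one_minus_le[of \<delta>] \<delta> m(1) by (simp add: \<epsilon>_def \<delta>_def)
  let ?t = "normal_log (tilt \<delta> I)"
  have t: "osc L ?t \<le> \<epsilon>" unfolding \<epsilon>_def using osc_normal_log_tilt \<delta> by simp
  have tilt_pos: "\<forall>i\<in>L. 0 < tilt \<delta> I i" using \<delta> by (simp add: tilt_def)
  define F where "F u = log_map u + ?t" for u
  have F_eq: "F u = normal_log (\<lambda>i. tilt \<delta> I i * h (expv u) i)" for u
    using normal_log_mult[OF tilt_pos] positive[OF pos_vec_expv] by (simp add: F_def log_map_def add.commute)
  have F_cont: "continuous_on UNIV F" unfolding F_def by (intro continuous_intros continuous_on_log_map)
  have F_normalized: "F u \<in> normalized" for u unfolding F_eq by (rule normal_log_normalized)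
  show ?thesis
  proof (rule fixed_point_or_escape[OF R(1) F_cont F_normalized])
    fix u assume u: "u \<in> normalized" "F u = u"
    have "\<forall>i\<in>L. 0 < tilt \<delta> I i * h (expv u) i" using tilt_pos positive[OF pos_vec_expv] by simp
    hence "tilt \<delta> I i * h (expv u) i = (tilt \<delta> I base * h (expv u) base) * expv u i" if "i \<in> L" for i
      using eigenvector_of_normal_log[OF u(1) _ _ that] u(2) F_eq by auto
    thus ?thesis using that \<delta> pos_vec_expv by blast
  next
    fix u assume u: "u \<in> normalized" "osc L (u - normal_log v) = R"
      "osc L (F u - u) + R = osc L (F u - normal_log v)"
    \<comment> \<open>the tilt moves points by at most \<epsilon>, so log_map would displace u by at most 2 \<epsilon> < m\<close>
    have "osc L (F u - normal_log v) \<le> osc L ?t + osc L (log_map u - log_map (normal_log v))"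
      using osc_triangle[OF nonempty, of ?t "log_map u - log_map (normal_log v)"]
      by (simp add: F_def log_map_fixes_centre algebra_simps)
    also have "\<dots> \<le> \<epsilon> + R" using t log_map_nonexpansive[of u "normal_log v"] u(2) by simp
    finally have "osc L (F u - u) \<le> \<epsilon>" using u(3) by simp
    moreover have "osc L (log_map u - u) \<le> osc L (- ?t) + osc L (F u - u)"
      using osc_triangle[OF nonempty, of "- ?t" "F u - u"] by (simp add: F_def algebra_simps)
    ultimately have "osc L (log_map u - u) \<le> 2 * \<epsilon>" using t by (simp add: osc_uminus)
    with m(2)[OF u(1,2)] \<open>2 * \<epsilon> < m\<close> show ?thesis by simp
  qed
qed

end

lemma (in bounded_eigenvectors) split_eigenvector:
  assumes "i \<in> L \<inter> I" "k \<in> L - I"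
  obtains w a b where "pos_vec w" "0 < a" "a < b"
    "\<And>i. i \<in> L \<inter> I \<Longrightarrow> h w i = a * w i" "\<And>i. i \<in> L - I \<Longrightarrow> h w i = b * w i"
proof -
  interpret positive_bounded_eigenvectors h L v \<mu> C
    using eigenvalue_pos[of i k] assms by unfold_locales auto
  obtain \<delta> w \<nu> where \<delta>: "0 < \<delta>" "\<delta> < 1" and w: "pos_vec w"
    and eq: "\<And>i. i \<in> L \<Longrightarrow> tilt \<delta> I i * h w i = \<nu> * w i"
    using perturbed_eigenvector by blast
  have "0 < (1 + \<delta>) * h w i" using positive[OF w] assms(1) \<delta> by simp
  also have "\<dots> = \<nu> * w i" using eq[of i] assms(1) by (simp add: tilt_def)
  finally have \<nu>: "0 < \<nu>" using w by (simp add: pos_vec_def zero_less_mult_iff) (meson not_less_iff_gr_or_eq)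
  show ?thesis
  proof (rule that[OF w])
    show "0 < \<nu> / (1 + \<delta>)" "\<nu> / (1 + \<delta>) < \<nu> / (1 - \<delta>)" using \<nu> \<delta> by (simp_all add: frac_less2)
    show "h w j = \<nu> / (1 + \<delta>) * w j" if "j \<in> L \<inter> I" for j
      using eq[of j] that \<delta> by (simp add: tilt_def field_simps)
    show "h w j = \<nu> / (1 - \<delta>) * w j" if "j \<in> L - I" for j
      using eq[of j] that \<delta> by (simp add: tilt_def field_simps)
  qed
qed

section \<open>The faces of an order-preserving homogeneous map\<close>

lemma pos_vec_shift: "nonneg_vec x \<Longrightarrow> 0 < e \<Longrightarrow> pos_vec (\<lambda>j. x j + e)"
  by (simp add: nonneg_vec_def pos_vec_def add_nonneg_pos)

lemma nonneg_vec_P0: "pos_vec x \<Longrightarrow> nonneg_vec (P0 J x)"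
  by (auto simp: P0_def pos_vec_def nonneg_vec_def less_imp_le)

lemma face0_apply: "face0 f J x i = (if i \<in> J then ext0 f (P0 J x) i else 0)"
  by (simp add: face0_def P0_def)

lemma faceinf_apply: "faceinf f K x i = (if i \<in> K then extinf f (Pinf K x) i else \<infinity>)"
  by (simp add: faceinf_def Pinf_def)

lemma r0_le_ratio: "pos_vec x \<Longrightarrow> (\<And>i. g x i / x i \<le> c) \<Longrightarrow> r0 g \<le> ereal c"
proof -
  assume x: "pos_vec x" and c: "\<And>i. g x i / x i \<le> c"
  have "r0 g \<le> ereal (MAX i. g x i / x i)" unfolding r0_def using x by (intro INF_lower) auto
  also have "(MAX i. g x i / x i) \<le> c" using c by (subst Max_le_iff) auto
  finally show ?thesis by simp
qed

lemma lambdainf_ge_ratio: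
  "pos_vec x \<Longrightarrow> (\<And>i. c \<le> g (\<lambda>j. ereal (x j)) i / ereal (x i)) \<Longrightarrow> c \<le> lambdainf g"
proof -
  assume x: "pos_vec x" and c: "\<And>i. c \<le> g (\<lambda>j. ereal (x j)) i / ereal (x i)"
  have "c \<le> (MIN i. g (\<lambda>j. ereal (x j)) i / ereal (x i))" by (rule Min.boundedI) (use c in auto)
  also have "\<dots> \<le> lambdainf g" unfolding lambdainf_def by (rule SUP_upper) (use x in simp)
  finally show ?thesis .
qed

lemma r0_less_ratio:
  assumes "r0 g < ereal c"
  obtains x where "pos_vec x" "\<And>i. g x i < c * x i"
proof -
  obtain x where x: "pos_vec x" "(MAX i. g x i / x i) < c"
    using assms unfolding r0_def by (subst (asm) INF_less_iff) auto
  have "g x i < c * x i" for i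
  proof -
    have "g x i / x i \<le> (MAX i. g x i / x i)" by (rule Max_ge) auto
    thus ?thesis using x by (simp add: pos_vec_def pos_divide_less_eq)
  qed
  with x(1) that show ?thesis by blast
qed

lemma lambdainf_greater_ratio:
  assumes "ereal c < lambdainf g"
  obtains x where "pos_vec x" "\<And>i. ereal (c * x i) < g (\<lambda>j. ereal (x j)) i"
proof -
  obtain x where x: "pos_vec x" "ereal c < (MIN i. g (\<lambda>j. ereal (x j)) i / ereal (x i))"
    using assms unfolding lambdainf_def by (subst (asm) less_SUP_iff) auto
  have "ereal (c * x i) < g (\<lambda>j. ereal (x j)) i" for i
  proof -
    have "(MIN i. g (\<lambda>j. ereal (x j)) i / ereal (x i)) \<le> g (\<lambda>j. ereal (x j)) i / ereal (x i)"
      by (rule Min_le) auto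
    hence "ereal c < g (\<lambda>j. ereal (x j)) i / ereal (x i)" using x(2) by simp
    thus ?thesis using x(1) by (simp add: pos_vec_def ereal_less_divide_pos mult.commute)
  qed
  with x(1) that show ?thesis by blast
qed

lemma r0_face0_le_ratio:
  assumes x: "pos_vec x" and c: "0 \<le> c" and le: "\<And>i. i \<in> J \<Longrightarrow> ext0 f (P0 J x) i \<le> c * x i"
  shows "r0 (face0 f J) \<le> ereal c"
proof (rule r0_le_ratio[OF x])
  fix i
  have "0 < x i" using x by (simp add: pos_vec_def)
  thus "face0 f J x i / x i \<le> c" using le[of i] c by (simp add: face0_apply pos_divide_le_eq)
qed

lemma lambdainf_faceinf_ge_ratio:
  assumes x: "pos_vec x" and ge: "\<And>i. i \<in> K \<Longrightarrow> ereal (c * x i) \<le> extinf f (Pinf K (\<lambda>j. ereal (x j))) i"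
  shows "ereal c \<le> lambdainf (faceinf f K)"
proof (rule lambdainf_ge_ratio[OF x])
  fix i
  have "0 < x i" using x by (simp add: pos_vec_def)
  thus "ereal c \<le> faceinf f K (\<lambda>j. ereal (x j)) i / ereal (x i)"
    using ge[of i] by (simp add: faceinf_apply ereal_le_divide_pos mult.commute)
qed

lemma partinf_as_Pinf:
  assumes "v \<in> partinf K"
  obtains v' where "pos_vec v'" "Pinf K (\<lambda>j. ereal (v' j)) = v"
proof
  define v' where "v' i = (if i \<in> K then real_of_ereal (v i) else 1)" for i
  have v: "0 < v i" "v i < \<infinity> \<longleftrightarrow> i \<in> K" for i using assms by (auto simp: partinf_def)
  show "pos_vec v'" unfolding pos_vec_def
  proof
    fix i show "0 < v' i" using v[of i] by (cases "v i") (auto simp: v'_def)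
  qed
  show "Pinf K (\<lambda>j. ereal (v' j)) = v"
  proof
    fix i show "Pinf K (\<lambda>j. ereal (v' j)) i = v i" using v[of i] by (cases "v i") (auto simp: v'_def Pinf_def)
  qed
qed

locale order_preserving_homogeneous =
  fixes f :: "('n::finite \<Rightarrow> real) \<Rightarrow> 'n \<Rightarrow> real"
  assumes positive: "\<And>x. pos_vec x \<Longrightarrow> pos_vec (f x)"
    and order_preserving: "order_preserving_pos f"
    and homogeneous: "homogeneous_pos f"
begin

lemma f_mono: "pos_vec x \<Longrightarrow> pos_vec y \<Longrightarrow> \<forall>j. x j \<le> y j \<Longrightarrow> f x i \<le> f y i"
  using order_preserving unfolding order_preserving_pos_def le_fun_def by blast

lemma f_pos: "pos_vec x \<Longrightarrow> 0 < f x i"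
  using positive unfolding pos_vec_def by blast

lemma f_hom: "pos_vec x \<Longrightarrow> 0 < t \<Longrightarrow> f (\<lambda>j. t * x j) i = t * f x i"
  using homogeneous unfolding homogeneous_pos_def by metis

lemma bdd_below_ext0: "nonneg_vec x \<Longrightarrow> bdd_below ((\<lambda>e. f (\<lambda>j. x j + e) i) ` {0<..})"
  by (rule bdd_belowI[of _ 0]) (auto intro: less_imp_le f_pos pos_vec_shift)

lemma ext0_le: "nonneg_vec x \<Longrightarrow> 0 < e \<Longrightarrow> ext0 f x i \<le> f (\<lambda>j. x j + e) i"
  unfolding ext0_def by (rule cINF_lower[OF bdd_below_ext0]) auto

lemma ext0_nonneg: "nonneg_vec x \<Longrightarrow> 0 \<le> ext0 f x i"
  unfolding ext0_def by (rule cINF_greatest) (auto intro: less_imp_le f_pos pos_vec_shift)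

lemma ext0_less: "nonneg_vec x \<Longrightarrow> ext0 f x i < a \<Longrightarrow> \<exists>e>0. f (\<lambda>j. x j + e) i < a"
  unfolding ext0_def using cINF_less_iff[of "{0<..}", OF _ bdd_below_ext0] by auto

lemma ext0_mono:
  assumes "nonneg_vec x" "nonneg_vec y" "\<forall>j. x j \<le> y j"
  shows "ext0 f x i \<le> ext0 f y i"
  unfolding ext0_def[of f y]
proof (rule cINF_greatest)
  fix e :: real assume e: "e \<in> {0<..}"
  have "ext0 f x i \<le> f (\<lambda>j. x j + e) i" using ext0_le assms e by auto
  also have "\<dots> \<le> f (\<lambda>j. y j + e) i" using assms e by (intro f_mono pos_vec_shift) auto
  finally show "ext0 f x i \<le> f (\<lambda>j. y j + e) i" .
qed auto

lemma ext0_hom: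
  assumes x: "nonneg_vec x" and t: "0 < t"
  shows "ext0 f (\<lambda>j. t * x j) i = t * ext0 f x i"
proof -
  have tx: "nonneg_vec (\<lambda>j. t * x j)" using x t by (simp add: nonneg_vec_def)
  have "ext0 f (\<lambda>j. t * x j) i / t \<le> ext0 f x i" unfolding ext0_def[of f x]
  proof (rule cINF_greatest)
    fix e :: real assume e: "e \<in> {0<..}"
    have "ext0 f (\<lambda>j. t * x j) i \<le> f (\<lambda>j. t * x j + t * e) i" using ext0_le[OF tx, of "t * e"] e t by simp
    also have "\<dots> = t * f (\<lambda>j. x j + e) i"
      using f_hom[OF pos_vec_shift[OF x], of e t] e t by (simp add: algebra_simps)
    finally show "ext0 f (\<lambda>j. t * x j) i / t \<le> f (\<lambda>j. x j + e) i" using t by (simp add: field_simps)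
  qed auto
  moreover have "t * ext0 f x i \<le> ext0 f (\<lambda>j. t * x j) i" unfolding ext0_def[of f "\<lambda>j. t * x j"]
  proof (rule cINF_greatest)
    fix e :: real assume e: "e \<in> {0<..}"
    have "t * ext0 f x i \<le> t * f (\<lambda>j. x j + e / t) i" using ext0_le[OF x, of "e / t"] e t by simp
    also have "\<dots> = f (\<lambda>j. t * x j + e) i"
      using f_hom[OF pos_vec_shift[OF x], of "e / t" t] e t by (simp add: algebra_simps)
    finally show "t * ext0 f x i \<le> f (\<lambda>j. t * x j + e) i" .
  qed auto
  ultimately show ?thesis using t by (simp add: field_simps)
qed

lemma extinf_ge: "pos_vec y \<Longrightarrow> \<forall>j. ereal (y j) \<le> x j \<Longrightarrow> ereal (f y i) \<le> extinf f x i"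
  unfolding extinf_def by (rule SUP_upper) auto

lemma extinf_greater: "a < extinf f x i \<Longrightarrow> \<exists>y. pos_vec y \<and> (\<forall>j. ereal (y j) \<le> x j) \<and> a < ereal (f y i)"
  unfolding extinf_def by (subst (asm) less_SUP_iff) auto

lemma extinf_mono: "\<forall>j. x j \<le> x' j \<Longrightarrow> extinf f x i \<le> extinf f x' i"
  unfolding extinf_def by (rule SUP_subset_mono) (auto intro: order_trans)

lemma extinf_hom:
  assumes x: "\<forall>j. 0 < x j" and t: "0 < t"
  shows "extinf f (\<lambda>j. ereal t * x j) i = ereal t * extinf f x i"
proof -
  let ?Y = "\<lambda>x. {y. pos_vec y \<and> (\<forall>j. ereal (y j) \<le> x j)}"
  have scale_le: "ereal (t * r) \<le> ereal t * X \<longleftrightarrow> ereal r \<le> X" for r X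
    using t by (cases X) auto
  have img: "?Y (\<lambda>j. ereal t * x j) = (\<lambda>y j. t * y j) ` ?Y x"
  proof (intro equalityI subsetI)
    fix y assume y: "y \<in> ?Y (\<lambda>j. ereal t * x j)"
    have "ereal ((1/t) * y j) \<le> x j" for j
      using y t scale_le[of "(1/t) * y j" "x j"] by simp
    hence "(\<lambda>j. (1/t) * y j) \<in> ?Y x" using y t by (auto simp: pos_vec_def)
    moreover have "y = (\<lambda>j. t * ((1/t) * y j))" using t by (simp add: fun_eq_iff)
    ultimately show "y \<in> (\<lambda>y j. t * y j) ` ?Y x"
      by (rule rev_image_eqI[where x = "\<lambda>j. (1/t) * y j"])
  next
    fix y assume "y \<in> (\<lambda>y j. t * y j) ` ?Y x"
    thus "y \<in> ?Y (\<lambda>j. ereal t * x j)" using t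
      by (auto simp: pos_vec_def scale_le simp del: ereal_times)
  qed
  have ne: "?Y x \<noteq> {}"
  proof -
    define y where "y j = (if x j = \<infinity> then 1 else real_of_ereal (x j))" for j
    have "0 < y j \<and> ereal (y j) \<le> x j" for j
      using x[rule_format, of j] by (cases "x j") (auto simp: y_def)
    hence "y \<in> ?Y x" by (simp add: pos_vec_def)
    thus ?thesis by blast
  qed
  have "extinf f (\<lambda>j. ereal t * x j) i = (SUP y\<in>?Y x. ereal (f (\<lambda>j. t * y j) i))"
    unfolding extinf_def img image_image by simp
  also have "\<dots> = (SUP y\<in>?Y x. ereal t * ereal (f y i))"
    using t by (intro SUP_cong refl) (simp add: f_hom)
  also have "\<dots> = ereal t * extinf f x i"
    unfolding extinf_def using Sup_ereal_mult_left'[OF ne, of t "\<lambda>y. ereal (f y i)"] t by simp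
  finally show ?thesis .
qed

lemma ext0_less_uniformly:
  assumes x: "nonneg_vec x" and less: "\<forall>j\<in>J. ext0 f x j < c j"
  obtains e where "0 < e" "\<And>j. j \<in> J \<Longrightarrow> f (\<lambda>k. x k + e) j < c j"
proof -
  have "\<forall>j\<in>J. \<exists>e>0. f (\<lambda>k. x k + e) j < c j" using ext0_less[OF x] less by blast
  then obtain E where E: "\<And>j. j \<in> J \<Longrightarrow> 0 < E j" "\<And>j. j \<in> J \<Longrightarrow> f (\<lambda>k. x k + E j) j < c j"
    by metis
  define e where "e = Min (insert 1 (E ` J))"
  have "e \<in> insert 1 (E ` J)" unfolding e_def by (rule Min_in) auto
  hence e_pos: "0 < e" using E(1) by auto
  have "f (\<lambda>k. x k + e) j < c j" if j: "j \<in> J" for j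
  proof -
    have "e \<le> E j" unfolding e_def using j by (intro Min_le) auto
    hence "f (\<lambda>k. x k + e) j \<le> f (\<lambda>k. x k + E j) j"
      using e_pos E(1)[OF j] by (intro f_mono pos_vec_shift x) auto
    thus ?thesis using E(2)[OF j] by simp
  qed
  with e_pos that show ?thesis by blast
qed

lemma extinf_greater_uniformly:
  assumes "K \<noteq> {}" "\<forall>k\<in>K. ereal (c k) < extinf f X k"
  obtains u where "pos_vec u" "\<forall>j. ereal (u j) \<le> X j" "\<And>k. k \<in> K \<Longrightarrow> c k < f u k"
proof -
  have "\<forall>k\<in>K. \<exists>u. pos_vec u \<and> (\<forall>j. ereal (u j) \<le> X j) \<and> c k < f u k"
  proof
    fix k assume "k \<in> K"
    from extinf_greater[OF assms(2)[rule_format, OF this]]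
    show "\<exists>u. pos_vec u \<and> (\<forall>j. ereal (u j) \<le> X j) \<and> c k < f u k" by simp
  qed
  then obtain U where U: "\<And>k. k \<in> K \<Longrightarrow> pos_vec (U k)" "\<And>k j. k \<in> K \<Longrightarrow> ereal (U k j) \<le> X j"
    "\<And>k. k \<in> K \<Longrightarrow> c k < f (U k) k"
    by metis
  define u where "u j = Max ((\<lambda>k. U k j) ` K)" for j
  have u_attained: "\<exists>k\<in>K. u j = U k j" for j
    unfolding u_def using Max_in[of "(\<lambda>k. U k j) ` K"] assms(1) by fastforce
  have u_ge: "U k j \<le> u j" if "k \<in> K" for k j unfolding u_def using that by (intro Max_ge) auto
  have u: "pos_vec u" unfolding pos_vec_def
    using u_attained U(1) by (metis pos_vec_def)
  moreover have "\<forall>j. ereal (u j) \<le> X j" using u_attained U(2) by metis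
  moreover have "c k < f u k" if "k \<in> K" for k
  proof -
    have "f (U k) k \<le> f u k" using u_ge that by (intro f_mono U(1) u) auto
    thus ?thesis using U(3)[OF that] by simp
  qed
  ultimately show ?thesis using that by blast
qed
lemma monotone_homogeneous_on_face0:
  assumes "J \<noteq> {}"
  shows "monotone_homogeneous_on (\<lambda>x. ext0 f (P0 J x)) J"
proof
  fix x y :: "'n \<Rightarrow> real" and i
  assume "pos_vec x" "pos_vec y" "\<forall>k\<in>J. x k \<le> y k"
  thus "ext0 f (P0 J x) i \<le> ext0 f (P0 J y) i"
    by (intro ext0_mono nonneg_vec_P0) (auto simp: P0_def)
next
  fix x :: "'n \<Rightarrow> real" and t :: real and i
  assume "pos_vec x" "0 < t"
  moreover have "P0 J (\<lambda>j. t * x j) = (\<lambda>j. t * P0 J x j)" by (auto simp: P0_def)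
  ultimately show "ext0 f (P0 J (\<lambda>j. t * x j)) i = t * ext0 f (P0 J x) i"
    by (simp add: ext0_hom nonneg_vec_P0)
qed (use assms in \<open>auto intro: ext0_nonneg nonneg_vec_P0\<close>)

lemma face0_bounded_eigenvectors:
  assumes J: "J \<noteq> {}" and eig: "eigvecs0 (face0 f J) J \<noteq> {}"
    and bounded: "dH_bounded0 J (eigvecs0 (face0 f J) J)"
  obtains v \<mu> C where "bounded_eigenvectors (\<lambda>x. ext0 f (P0 J x)) J v \<mu> C"
proof -
  obtain v \<mu> where v: "v \<in> part0 J" "face0 f J v = (\<lambda>i. \<mu> * v i)"
    using eig unfolding eigvecs0_def by auto
  obtain C where C: "\<forall>x\<in>eigvecs0 (face0 f J) J. \<forall>y\<in>eigvecs0 (face0 f J) J. hilbert J x y \<le> C"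
    using bounded unfolding dH_bounded0_def by auto
  have v_supp: "0 < v i \<longleftrightarrow> i \<in> J" "0 \<le> v i" for i
    using v(1) unfolding part0_def nonneg_vec_def by auto
  define v' where "v' i = (if i \<in> J then v i else 1)" for i
  have v': "pos_vec v'" using v_supp by (auto simp: v'_def pos_vec_def)
  have "v i = 0" if "i \<notin> J" for i using v_supp[of i] that by linarith
  hence "P0 J v' = v" "P0 J v = v" by (auto simp: P0_def v'_def)
  hence v'_eigen: "ext0 f (P0 J v') i = \<mu> * v' i" if "i \<in> J" for i
    using fun_cong[OF v(2), of i] that by (simp add: face0_apply v'_def)
  have eigvec: "P0 J x \<in> eigvecs0 (face0 f J) J"
    if "pos_vec x" "\<forall>i\<in>J. ext0 f (P0 J x) i = \<nu> * x i" for x \<nu>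
  proof -
    have "P0 J x \<in> part0 J"
      using that(1) by (auto simp: part0_def P0_def nonneg_vec_def pos_vec_def less_imp_le)
    moreover have "P0 J (P0 J x) = P0 J x" by (simp add: P0_def fun_eq_iff)
    hence "face0 f J (P0 J x) = (\<lambda>i. \<nu> * P0 J x i)"
      using that(2) by (auto simp: fun_eq_iff face0_apply P0_def)
    ultimately show ?thesis unfolding eigvecs0_def by blast
  qed
  have hilbert_le: "hilbert J x y \<le> C"
    if "pos_vec x" "pos_vec y" "\<forall>i\<in>J. ext0 f (P0 J x) i = \<nu>x * x i"
      "\<forall>i\<in>J. ext0 f (P0 J y) i = \<nu>y * y i" for x y \<nu>x \<nu>y
  proof -
    have "hilbert J (P0 J x) (P0 J y) \<le> C" using C eigvec that by blast
    moreover have "hilbert J (P0 J x) (P0 J y) = hilbert J x y" by (rule hilbert_cong) (auto simp: P0_def)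
    ultimately show ?thesis by simp
  qed
  show ?thesis
    by (intro that[of v' \<mu> C] bounded_eigenvectors.intro bounded_eigenvectors_axioms.intro
        monotone_homogeneous_on_face0[OF J] v' v'_eigen hilbert_le)
qed

lemma r0_face0_subset_le:
  assumes I: "I \<subseteq> J" and w: "pos_vec w" and a: "0 \<le> a"
    and sub: "\<forall>i\<in>I. ext0 f (P0 J w) i \<le> a * w i"
  shows "r0 (face0 f I) \<le> ereal a"
proof (rule r0_face0_le_ratio[OF w a])
  fix i assume "i \<in> I"
  have "ext0 f (P0 I w) i \<le> ext0 f (P0 J w) i"
    using I w by (intro ext0_mono nonneg_vec_P0) (auto simp: P0_def pos_vec_def less_imp_le)
  with sub \<open>i \<in> I\<close> show "ext0 f (P0 I w) i \<le> a * w i" by fastforce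
qed

lemma r0_face0_ge_subeigenvector:
  assumes J: "J \<noteq> {}" and w: "pos_vec w" and sub: "\<forall>i\<in>J. a * w i \<le> ext0 f (P0 J w) i"
  shows "ereal a \<le> r0 (face0 f J)"
  unfolding r0_def
proof (rule INF_greatest)
  fix x :: "'n \<Rightarrow> real" assume "x \<in> {x. pos_vec x}"
  hence x: "pos_vec x" by simp
  obtain j where j: "j \<in> J" "a * x j \<le> ext0 f (P0 J x) j"
    using monotone_homogeneous_on.subeigenvector_ratio[OF monotone_homogeneous_on_face0[OF J] w sub x]
    by blast
  have "a \<le> face0 f J x j / x j" using j x by (simp add: face0_apply pos_vec_def pos_le_divide_eq)
  also have "\<dots> \<le> (MAX i. face0 f J x i / x i)" by (rule Max_ge) auto
  finally show "ereal a \<le> ereal (MAX i. face0 f J x i / x i)" by simp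
qed

lemma ext0_le_extinf:
  assumes "nonneg_vec x" "0 < e" "\<forall>j. ereal (x j + e) \<le> X j"
  shows "ereal (ext0 f x i) \<le> extinf f X i"
proof -
  have "ereal (ext0 f x i) \<le> ereal (f (\<lambda>j. x j + e) i)" using ext0_le[OF assms(1,2)] by simp
  also have "\<dots> \<le> extinf f X i" by (rule extinf_ge[OF pos_vec_shift[OF assms(1,2)] assms(3)])
  finally show ?thesis .
qed

lemma r0_face0_less_witness:
  assumes "r0 (face0 f J) < ereal \<rho>"
  obtains y e where "pos_vec y" "0 < e" "\<And>j. j \<in> J \<Longrightarrow> f (\<lambda>k. P0 J y k + e) j < \<rho> * y j"
proof -
  obtain y where y: "pos_vec y" "\<And>i. face0 f J y i < \<rho> * y i" using r0_less_ratio[OF assms] by blast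
  have less: "\<forall>j\<in>J. ext0 f (P0 J y) j < \<rho> * y j"
  proof
    fix j assume "j \<in> J"
    with y(2)[of j] show "ext0 f (P0 J y) j < \<rho> * y j" by (simp add: face0_apply)
  qed
  obtain e where "0 < e" "\<And>j. j \<in> J \<Longrightarrow> f (\<lambda>k. P0 J y k + e) j < \<rho> * y j"
    using ext0_less_uniformly[OF nonneg_vec_P0[OF y(1)] less] by blast
  thus ?thesis by (rule that[OF y(1)])
qed

lemma lambdainf_faceinf_greater_witness:
  assumes K: "K \<noteq> {}" and gap: "ereal \<rho> < lambdainf (faceinf f K)"
  obtains y u where "pos_vec y" "pos_vec u" "\<forall>j. ereal (u j) \<le> Pinf K (\<lambda>j. ereal (y j)) j"
    "\<And>k. k \<in> K \<Longrightarrow> \<rho> * y k < f u k"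
proof -
  obtain y where y: "pos_vec y" "\<And>i. ereal (\<rho> * y i) < faceinf f K (\<lambda>j. ereal (y j)) i"
    using lambdainf_greater_ratio[OF gap] by blast
  have less: "\<forall>k\<in>K. ereal (\<rho> * y k) < extinf f (Pinf K (\<lambda>j. ereal (y j))) k"
  proof
    fix k assume "k \<in> K"
    with y(2)[of k] show "ereal (\<rho> * y k) < extinf f (Pinf K (\<lambda>j. ereal (y j))) k"
      by (simp add: faceinf_apply)
  qed
  obtain u where "pos_vec u" "\<forall>j. ereal (u j) \<le> Pinf K (\<lambda>j. ereal (y j)) j"
    "\<And>k. k \<in> K \<Longrightarrow> \<rho> * y k < f u k"
    using extinf_greater_uniformly[OF K less] by blast
  thus ?thesis by (rule that[OF y(1)])
qed

lemma lambdainf_faceinf_subset_gt: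
  assumes I: "I \<subseteq> J" and J: "J \<noteq> UNIV" and w: "pos_vec w" and ab: "0 < a" "a < b"
    and super: "\<forall>i\<in>J - I. b * w i \<le> ext0 f (P0 J w) i"
    and gap: "ereal a < lambdainf (faceinf f (- J))"
  shows "ereal a < lambdainf (faceinf f (- I))"
proof -
  obtain \<rho> where \<rho>: "a < \<rho>" "ereal \<rho> < lambdainf (faceinf f (- J))"
    using ereal_dense2[OF gap] by auto
  have "- J \<noteq> {}" using J by blast
  then obtain y u where y: "pos_vec y" and u: "pos_vec u"
    "\<forall>j. ereal (u j) \<le> Pinf (- J) (\<lambda>j. ereal (y j)) j" "\<And>k. k \<in> - J \<Longrightarrow> \<rho> * y k < f u k"
    using lambdainf_faceinf_greater_witness[OF _ \<rho>(2)] by blast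
  define c where "c = (a + b) / 2"
  have c: "0 < c" "a < c" "c < b" using ab by (auto simp: c_def)
  define e where "e = Min (range y)"
  have "e \<in> range y" unfolding e_def by (rule Min_in) auto
  hence e: "0 < e" using y by (auto simp: pos_vec_def)
  have e_le: "e \<le> y k" for k unfolding e_def by (rule Min_le) auto
  have "pos_vec (\<lambda>k. max (u k) (c * e / (b - c)))" using u(1) by (simp add: pos_vec_def less_max_iff_disj)
  then obtain t where t: "0 < t" "\<And>k. max (u k) (c * e / (b - c)) \<le> t * w k"
    using pos_vec_dominated[OF _ w] by blast
  have u_le: "u k \<le> t * w k" for k using t(2)[of k] by simp
  have e_bound: "c * e \<le> t * ((b - c) * w k)" for k
    using t(2)[of k] c by (simp add: pos_divide_le_eq mult_ac)
  have wp: "0 < w k" for k using w by (simp add: pos_vec_def)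
  define x where "x i = (if i \<in> I then 1 else if i \<in> J then t * w i + e else y i)" for i
  have x: "pos_vec x" using t(1) wp e y by (auto simp: x_def pos_vec_def add_pos_pos)
  have "ereal (min c \<rho>) \<le> lambdainf (faceinf f (- I))"
  proof (rule lambdainf_faceinf_ge_ratio[OF x])
    fix i assume iI: "i \<in> - I"
    let ?X = "Pinf (- I) (\<lambda>j. ereal (x j))"
    have "0 < x i" using x by (simp add: pos_vec_def)
    hence min_le: "min c \<rho> * x i \<le> c * x i" "min c \<rho> * x i \<le> \<rho> * x i" by simp_all
    show "ereal (min c \<rho> * x i) \<le> extinf f ?X i"
    proof (cases "i \<in> J")
      case iJ: True
      have "min c \<rho> * x i \<le> t * (b * w i)"
        using min_le(1) e_bound[of i] iI iJ by (simp add: x_def algebra_simps)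
      also have "\<dots> \<le> t * ext0 f (P0 J w) i" using super iI iJ t(1) by simp
      also have "\<dots> = ext0 f (P0 J (\<lambda>k. t * w k)) i"
      proof -
        have "P0 J (\<lambda>k. t * w k) = (\<lambda>k. t * P0 J w k)" by (auto simp: P0_def)
        thus ?thesis using ext0_hom[OF nonneg_vec_P0[OF w] t(1)] by simp
      qed
      finally have "ereal (min c \<rho> * x i) \<le> ereal (ext0 f (P0 J (\<lambda>k. t * w k)) i)" by simp
      also have "\<dots> \<le> extinf f ?X i"
        using e_le e by (intro ext0_le_extinf nonneg_vec_P0 pos_vec_scale w t(1))
          (auto simp: P0_def Pinf_def x_def)
      finally show ?thesis .
    next
      case iJ: False
      have "\<rho> * x i < f u i" using u(3)[of i] iI iJ by (simp add: x_def)
      hence "ereal (min c \<rho> * x i) \<le> ereal (f u i)" using min_le(2) by simp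
      also have "\<dots> \<le> extinf f ?X i"
      proof (rule extinf_ge[OF u(1)], intro allI)
        fix j show "ereal (u j) \<le> ?X j"
          using u(2)[rule_format, of j] u_le[of j] e by (auto simp: Pinf_def x_def)
      qed
      finally show ?thesis .
    qed
  qed
  moreover have "ereal a < ereal (min c \<rho>)" using c \<rho> by simp
  ultimately show ?thesis by (rule order_less_le_trans[rotated])
qed

lemma gap_subface:
  assumes J: "J \<noteq> UNIV" and gap: "r0 (face0 f J) < lambdainf (faceinf f (- J))"
    and eig: "eigvecs0 (face0 f J) J \<noteq> {}" and bounded: "dH_bounded0 J (eigvecs0 (face0 f J) J)"
    and I: "I \<noteq> {}" "I \<subseteq> J"
  shows "r0 (face0 f I) < lambdainf (faceinf f (- I))"
proof (cases "I = J")
  case False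
  obtain i k where ik: "i \<in> J \<inter> I" "k \<in> J - I" using I False by blast
  obtain v \<mu> C where eigenvectors: "bounded_eigenvectors (\<lambda>x. ext0 f (P0 J x)) J v \<mu> C"
    using face0_bounded_eigenvectors[OF _ eig bounded] I by blast
  obtain w a b where w: "pos_vec w" and ab: "0 < a" "a < b"
    and eigen_I: "\<And>i. i \<in> J \<inter> I \<Longrightarrow> ext0 f (P0 J w) i = a * w i"
    and eigen_JI: "\<And>i. i \<in> J - I \<Longrightarrow> ext0 f (P0 J w) i = b * w i"
    using bounded_eigenvectors.split_eigenvector[OF eigenvectors ik] by blast
  have "r0 (face0 f I) \<le> ereal a"
    using I(2) eigen_I by (intro r0_face0_subset_le[OF I(2) w]) (auto simp: less_imp_le ab)
  moreover have "ereal a \<le> r0 (face0 f J)"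
  proof (rule r0_face0_ge_subeigenvector[OF _ w])
    show "J \<noteq> {}" using I by blast
    show "\<forall>i\<in>J. a * w i \<le> ext0 f (P0 J w) i"
    proof
      fix i assume "i \<in> J"
      have "a * w i \<le> b * w i" using ab w by (simp add: pos_vec_def less_imp_le)
      thus "a * w i \<le> ext0 f (P0 J w) i" using eigen_I eigen_JI \<open>i \<in> J\<close> by (cases "i \<in> I") auto
    qed
  qed
  with gap have "ereal a < lambdainf (faceinf f (- J))" by simp
  hence "ereal a < lambdainf (faceinf f (- I))"
    using eigen_JI by (intro lambdainf_faceinf_subset_gt[OF I(2) J w ab]) auto
  ultimately show ?thesis by simp
qed (use gap in simp)

lemma extinf_Pinf_hom:
  assumes "pos_vec x" "0 < t"
  shows "extinf f (Pinf K (\<lambda>j. ereal (t * x j))) i = ereal t * extinf f (Pinf K (\<lambda>j. ereal (x j))) i"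
proof -
  have "Pinf K (\<lambda>j. ereal (t * x j)) = (\<lambda>j. ereal t * Pinf K (\<lambda>j. ereal (x j)) j)"
    using assms(2) by (auto simp: Pinf_def fun_eq_iff)
  moreover have "\<forall>j. 0 < Pinf K (\<lambda>j. ereal (x j)) j" using assms(1) by (simp add: Pinf_def pos_vec_def)
  ultimately show ?thesis using extinf_hom assms(2) by simp
qed

lemma extinf_Pinf_ge: "pos_vec x \<Longrightarrow> ereal (f x i) \<le> extinf f (Pinf K (\<lambda>j. ereal (x j))) i"
  by (rule extinf_ge) (auto simp: Pinf_def)

definition faceinf_real :: "'n set \<Rightarrow> ('n \<Rightarrow> real) \<Rightarrow> 'n \<Rightarrow> real" where
  "faceinf_real K x i = real_of_ereal (extinf f (Pinf K (\<lambda>j. ereal (x j))) i)"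

lemma extinf_finite_of_eigenvector:
  assumes eig: "eigvecsinf (faceinf f K) K \<noteq> {}" and x: "pos_vec x" and i: "i \<in> K"
  shows "extinf f (Pinf K (\<lambda>j. ereal (x j))) i = ereal (faceinf_real K x i)"
    and "0 < faceinf_real K x i"
proof -
  obtain v \<mu> where v: "v \<in> partinf K" "faceinf f K v = (\<lambda>i. ereal \<mu> * v i)"
    using eig unfolding eigvecsinf_def by auto
  obtain v' where v': "pos_vec v'" "Pinf K (\<lambda>j. ereal (v' j)) = v" using partinf_as_Pinf[OF v(1)] .
  have Pv: "Pinf K v = v" unfolding v'(2)[symmetric] by (simp add: Pinf_def fun_eq_iff)
  obtain c where c: "0 < c" "\<And>k. x k \<le> c * v' k" using pos_vec_dominated[OF x v'(1)] by blast
  have "extinf f (Pinf K (\<lambda>j. ereal (x j))) i \<le> extinf f (Pinf K (\<lambda>j. ereal (c * v' j))) i"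
    using c(2) by (intro extinf_mono) (auto simp: Pinf_def)
  also have "\<dots> = ereal c * faceinf f K v i"
    using extinf_Pinf_hom[OF v'(1) c(1), of K i] i by (simp add: faceinf_apply v'(2) Pv)
  also have "\<dots> < \<infinity>"
  proof -
    have "0 < v i" "v i < \<infinity>" using v(1) i by (auto simp: partinf_def)
    thus ?thesis using v(2) by (cases "v i") auto
  qed
  finally have "extinf f (Pinf K (\<lambda>j. ereal (x j))) i < \<infinity>" .
  moreover have "0 < ereal (f x i)" using f_pos[OF x] by simp
  hence "0 < extinf f (Pinf K (\<lambda>j. ereal (x j))) i" using extinf_Pinf_ge[OF x] by (rule order_less_le_trans)
  ultimately show "extinf f (Pinf K (\<lambda>j. ereal (x j))) i = ereal (faceinf_real K x i)"
    and "0 < faceinf_real K x i"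
    by (cases "extinf f (Pinf K (\<lambda>j. ereal (x j))) i"; simp add: faceinf_real_def)+
qed

lemma monotone_homogeneous_on_faceinf_real:
  assumes K: "K \<noteq> {}" and eig: "eigvecsinf (faceinf f K) K \<noteq> {}"
  shows "monotone_homogeneous_on (faceinf_real K) K"
proof
  note finite = extinf_finite_of_eigenvector[OF eig]
  fix x y :: "'n \<Rightarrow> real" and i
  assume "pos_vec x" "pos_vec y" "\<forall>k\<in>K. x k \<le> y k" "i \<in> K"
  moreover have "extinf f (Pinf K (\<lambda>j. ereal (x j))) i \<le> extinf f (Pinf K (\<lambda>j. ereal (y j))) i"
    using \<open>\<forall>k\<in>K. x k \<le> y k\<close> by (intro extinf_mono) (auto simp: Pinf_def)
  ultimately show "faceinf_real K x i \<le> faceinf_real K y i" using finite(1) by simp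
next
  note finite = extinf_finite_of_eigenvector[OF eig]
  fix x :: "'n \<Rightarrow> real" and t :: real and i
  assume "pos_vec x" "0 < t" "i \<in> K"
  thus "faceinf_real K (\<lambda>j. t * x j) i = t * faceinf_real K x i"
    using extinf_Pinf_hom[of x t K i] finite(1)[of x i] finite(1)[of "\<lambda>j. t * x j" i]
    by (simp add: pos_vec_scale)
qed (use K extinf_finite_of_eigenvector(2)[OF eig] in \<open>auto intro: less_imp_le\<close>)

lemma faceinf_bounded_eigenvectors:
  assumes K: "K \<noteq> {}" and eig: "eigvecsinf (faceinf f K) K \<noteq> {}"
    and bounded: "dH_boundedinf K (eigvecsinf (faceinf f K) K)"
  obtains v \<mu> C where "bounded_eigenvectors (faceinf_real K) K v \<mu> C"
proof -
  note finite = extinf_finite_of_eigenvector[OF eig]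
  obtain v \<mu> where v: "v \<in> partinf K" "faceinf f K v = (\<lambda>i. ereal \<mu> * v i)"
    using eig unfolding eigvecsinf_def by auto
  obtain C where C: "\<forall>x\<in>eigvecsinf (faceinf f K) K. \<forall>y\<in>eigvecsinf (faceinf f K) K.
      hilbert K (\<lambda>i. real_of_ereal (x i)) (\<lambda>i. real_of_ereal (y i)) \<le> C"
    using bounded unfolding dH_boundedinf_def by auto
  obtain v' where v': "pos_vec v'" "Pinf K (\<lambda>j. ereal (v' j)) = v" using partinf_as_Pinf[OF v(1)] .
  have Pv: "Pinf K v = v" unfolding v'(2)[symmetric] by (simp add: Pinf_def fun_eq_iff)
  have v'_eigen: "faceinf_real K v' i = \<mu> * v' i" if "i \<in> K" for i
  proof -
    have "ereal (faceinf_real K v' i) = faceinf f K v i"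
      using finite(1)[OF v'(1) that] that by (simp add: faceinf_apply v'(2) Pv)
    also have "\<dots> = ereal (\<mu> * v' i)" using v(2) v'(2)[symmetric] that by (simp add: Pinf_def)
    finally show ?thesis by simp
  qed
  have eigvec: "Pinf K (\<lambda>j. ereal (x j)) \<in> eigvecsinf (faceinf f K) K"
    if x: "pos_vec x" and eigen: "\<forall>i\<in>K. faceinf_real K x i = \<nu> * x i" for x \<nu>
  proof -
    obtain k where k: "k \<in> K" using K by blast
    have "0 < \<nu> * x k" using finite(2)[OF x k] eigen k by simp
    hence \<nu>: "0 < \<nu>" using x by (simp add: pos_vec_def zero_less_mult_iff) (meson not_less_iff_gr_or_eq)
    have "Pinf K (\<lambda>j. ereal (x j)) \<in> partinf K" using x by (auto simp: partinf_def Pinf_def pos_vec_def)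
    moreover have "faceinf f K (Pinf K (\<lambda>j. ereal (x j))) i = ereal \<nu> * Pinf K (\<lambda>j. ereal (x j)) i" for i
    proof (cases "i \<in> K")
      case True
      have "Pinf K (Pinf K (\<lambda>j. ereal (x j))) = Pinf K (\<lambda>j. ereal (x j))" by (simp add: Pinf_def fun_eq_iff)
      thus ?thesis using True finite(1)[OF x True] eigen by (simp add: faceinf_apply Pinf_def)
    qed (use \<nu> in \<open>simp add: faceinf_apply Pinf_def\<close>)
    ultimately show ?thesis unfolding eigvecsinf_def by blast
  qed
  have hilbert_le: "hilbert K x y \<le> C"
    if "pos_vec x" "pos_vec y" "\<forall>i\<in>K. faceinf_real K x i = \<nu>x * x i"
      "\<forall>i\<in>K. faceinf_real K y i = \<nu>y * y i" for x y \<nu>x \<nu>y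
  proof -
    have "hilbert K (\<lambda>i. real_of_ereal (Pinf K (\<lambda>j. ereal (x j)) i))
        (\<lambda>i. real_of_ereal (Pinf K (\<lambda>j. ereal (y j)) i)) \<le> C"
      using C eigvec that by blast
    moreover have "hilbert K (\<lambda>i. real_of_ereal (Pinf K (\<lambda>j. ereal (x j)) i))
        (\<lambda>i. real_of_ereal (Pinf K (\<lambda>j. ereal (y j)) i)) = hilbert K x y"
      by (rule hilbert_cong) (auto simp: Pinf_def)
    ultimately show ?thesis by simp
  qed
  show ?thesis
    by (intro that[of v' \<mu> C] bounded_eigenvectors.intro bounded_eigenvectors_axioms.intro
        monotone_homogeneous_on_faceinf_real[OF K eig] v'(1) v'_eigen hilbert_le)
qed

lemma lambdainf_faceinf_subset_ge:
  assumes K: "K' \<subseteq> K" and w: "pos_vec w"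
    and ge: "\<forall>i\<in>K'. ereal (b * w i) \<le> extinf f (Pinf K (\<lambda>j. ereal (w j))) i"
  shows "ereal b \<le> lambdainf (faceinf f K')"
proof (rule lambdainf_faceinf_ge_ratio[OF w])
  fix i assume "i \<in> K'"
  have "extinf f (Pinf K (\<lambda>j. ereal (w j))) i \<le> extinf f (Pinf K' (\<lambda>j. ereal (w j))) i"
    using K by (intro extinf_mono) (auto simp: Pinf_def)
  with ge \<open>i \<in> K'\<close> show "ereal (b * w i) \<le> extinf f (Pinf K' (\<lambda>j. ereal (w j))) i" by fastforce
qed

lemma lambdainf_faceinf_le_supereigenvector:
  assumes K: "K \<noteq> {}" and eig: "eigvecsinf (faceinf f K) K \<noteq> {}"
    and w: "pos_vec w" and super: "\<forall>i\<in>K. faceinf_real K w i \<le> b * w i"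
  shows "lambdainf (faceinf f K) \<le> ereal b"
  unfolding lambdainf_def
proof (rule SUP_least)
  fix x :: "'n \<Rightarrow> real" assume "x \<in> {x. pos_vec x}"
  hence x: "pos_vec x" by simp
  obtain k where k: "k \<in> K" "faceinf_real K x k \<le> b * x k"
    using monotone_homogeneous_on.supereigenvector_ratio[OF monotone_homogeneous_on_faceinf_real[OF K eig] w super x]
    by blast
  have "0 < x k" using x by (simp add: pos_vec_def)
  hence "faceinf f K (\<lambda>j. ereal (x j)) k / ereal (x k) \<le> ereal b"
    using k extinf_finite_of_eigenvector(1)[OF eig x k(1)] by (simp add: faceinf_apply pos_divide_le_eq)
  moreover have "(MIN i. faceinf f K (\<lambda>j. ereal (x j)) i / ereal (x i)) \<le> faceinf f K (\<lambda>j. ereal (x j)) k / ereal (x k)"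
    by (rule Min_le) auto
  ultimately show "(MIN i. faceinf f K (\<lambda>j. ereal (x j)) i / ereal (x i)) \<le> ereal b"
    by (rule order_trans[rotated])
qed

lemma r0_face0_supset_lt:
  assumes J: "J \<subseteq> I" and w: "pos_vec w" and ab: "0 < a" "a < b"
    and sub: "\<forall>i\<in>I - J. extinf f (Pinf (- J) (\<lambda>j. ereal (w j))) i \<le> ereal (a * w i)"
    and gap: "r0 (face0 f J) < ereal b"
  shows "r0 (face0 f I) < ereal b"
proof -
  obtain \<rho> where \<rho>: "r0 (face0 f J) < ereal \<rho>" "\<rho> < b" using ereal_dense2[OF gap] by auto
  obtain y e where y: "pos_vec y" and e: "0 < e" "\<And>j. j \<in> J \<Longrightarrow> f (\<lambda>k. P0 J y k + e) j < \<rho> * y j"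
    using r0_face0_less_witness[OF \<rho>(1)] by blast
  define c where "c = (a + b) / 2"
  define q where "q = c / a"
  have c: "0 < c" "c < b" "q * a = c" "1 < q" using ab by (auto simp: c_def q_def)
  have "pos_vec (\<lambda>_. e / 2)" using e(1) by (simp add: pos_vec_def)
  then obtain M where M: "0 < M" "\<And>k. w k \<le> M * (e / 2)" using pos_vec_dominated[OF w] by blast
  define s where "s = 1 / M"
  have s: "0 < s" "\<And>k. s * w k \<le> e / 2" using M by (auto simp: s_def field_simps)
  have one: "pos_vec (\<lambda>_. 1)" by (simp add: pos_vec_def)
  obtain m where m: "0 < m" "\<And>k. m \<le> w k" using pos_vec_dominates[OF w one] by auto
  define e' where "e' = (q - 1) * s * m"
  have e': "0 < e'" "\<And>k. e' \<le> (q - 1) * (s * w k)"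
    using c(4) s(1) m by (auto simp: e'_def mult_left_mono)
  have wp: "0 < w k" for k using w by (simp add: pos_vec_def)
  define x where "x i = (if i \<in> J then y i else if i \<in> I then s * w i else 1)" for i
  have x: "pos_vec x" using y s(1) wp by (auto simp: x_def pos_vec_def)
  have "r0 (face0 f I) \<le> ereal (max \<rho> c)"
  proof (rule r0_face0_le_ratio[OF x])
    show "0 \<le> max \<rho> c" using c by simp
    fix i assume iI: "i \<in> I"
    have "0 < x i" using x by (simp add: pos_vec_def)
    hence max_ge: "\<rho> * x i \<le> max \<rho> c * x i" "c * x i \<le> max \<rho> c * x i" by simp_all
    show "ext0 f (P0 I x) i \<le> max \<rho> c * x i"
    proof (cases "i \<in> J")
      case iJ: True
      have "ext0 f (P0 I x) i \<le> f (\<lambda>k. P0 I x k + e / 2) i"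
        using e(1) by (intro ext0_le nonneg_vec_P0 x) simp
      also have "\<dots> \<le> f (\<lambda>k. P0 J y k + e) i"
      proof (intro f_mono pos_vec_shift nonneg_vec_P0 x y allI)
        fix k show "P0 I x k + e / 2 \<le> P0 J y k + e"
          using s(2)[of k] e(1) J by (auto simp: P0_def x_def)
      qed (use e(1) in auto)
      also have "\<dots> \<le> \<rho> * x i" using e(2)[OF iJ] iJ by (simp add: x_def)
      finally show ?thesis using max_ge(1) by simp
    next
      case iJ: False
      have "ereal (ext0 f (P0 I x) i) \<le> extinf f (Pinf (- J) (\<lambda>k. ereal ((q * s) * w k))) i"
      proof (intro ext0_le_extinf[where e = e'] nonneg_vec_P0 x e'(1) allI)
        fix k
        have "s * w k + e' \<le> q * s * w k" "e' \<le> q * s * w k"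
          using e'(2)[of k] mult_pos_pos[OF s(1) wp[of k]] by (auto simp: algebra_simps)
        thus "ereal (P0 I x k + e') \<le> Pinf (- J) (\<lambda>k. ereal (q * s * w k)) k"
          by (auto simp: P0_def Pinf_def x_def)
      qed
      also have "\<dots> = ereal (q * s) * extinf f (Pinf (- J) (\<lambda>k. ereal (w k))) i"
        using extinf_Pinf_hom[OF w, of "q * s"] c(4) s(1) by simp
      also have "\<dots> \<le> ereal (q * s) * ereal (a * w i)"
        using sub iI iJ c(4) s(1) by (intro ereal_mult_left_mono) auto
      also have "\<dots> = ereal (c * x i)" using iI iJ c(3) by (simp add: x_def algebra_simps)
      finally show ?thesis using max_ge(2) by simp
    qed
  qed
  also have "\<dots> < ereal b" using \<rho>(2) c(2) by simp
  finally show ?thesis .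
qed

lemma gap_superface:
  assumes J: "J \<noteq> {}" and gap: "r0 (face0 f J) < lambdainf (faceinf f (- J))"
    and eig: "eigvecsinf (faceinf f (- J)) (- J) \<noteq> {}"
    and bounded: "dH_boundedinf (- J) (eigvecsinf (faceinf f (- J)) (- J))"
    and I: "J \<subseteq> I" "I \<noteq> UNIV"
  shows "r0 (face0 f I) < lambdainf (faceinf f (- I))"
proof (cases "I = J")
  case False
  obtain i k where ik: "i \<in> - J \<inter> (I - J)" "k \<in> - J - (I - J)" using I False by blast
  hence K: "- J \<noteq> {}" by blast
  obtain v \<mu> C where eigenvectors: "bounded_eigenvectors (faceinf_real (- J)) (- J) v \<mu> C"
    using faceinf_bounded_eigenvectors[OF K eig bounded] by blast
  obtain w a b where w: "pos_vec w" and ab: "0 < a" "a < b"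
    and eigen_IJ: "\<And>i. i \<in> - J \<inter> (I - J) \<Longrightarrow> faceinf_real (- J) w i = a * w i"
    and eigen_I: "\<And>i. i \<in> - J - (I - J) \<Longrightarrow> faceinf_real (- J) w i = b * w i"
    using bounded_eigenvectors.split_eigenvector[OF eigenvectors ik] by blast
  note finite = extinf_finite_of_eigenvector(1)[OF eig w]
  have "ereal b \<le> lambdainf (faceinf f (- I))"
  proof (rule lambdainf_faceinf_subset_ge[of "- I" "- J", OF _ w])
    show "- I \<subseteq> - J" using I(1) by blast
    show "\<forall>i\<in>- I. ereal (b * w i) \<le> extinf f (Pinf (- J) (\<lambda>j. ereal (w j))) i"
    proof
      fix i assume "i \<in> - I"
      hence i: "i \<in> - J - (I - J)" using I(1) by blast
      show "ereal (b * w i) \<le> extinf f (Pinf (- J) (\<lambda>j. ereal (w j))) i"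
        using eigen_I[OF i] finite[of i] i by simp
    qed
  qed
  moreover have "lambdainf (faceinf f (- J)) \<le> ereal b"
  proof (rule lambdainf_faceinf_le_supereigenvector[OF K eig w], rule ballI)
    fix i assume "i \<in> - J"
    have "a * w i \<le> b * w i" using ab w by (simp add: pos_vec_def less_imp_le)
    thus "faceinf_real (- J) w i \<le> b * w i" using eigen_IJ eigen_I \<open>i \<in> - J\<close> by (cases "i \<in> I") auto
  qed
  with gap have "r0 (face0 f J) < ereal b" by simp
  hence "r0 (face0 f I) < ereal b"
    using eigen_IJ finite by (intro r0_face0_supset_lt[OF I(1) w ab]) auto
  ultimately show ?thesis by simp
qed (use gap in simp)

end

theorem theorem3p4:
  fixes f :: "('n::finite \<Rightarrow> real) \<Rightarrow> ('n \<Rightarrow> real)"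
    and J :: "'n set"
  assumes fpos: "\<And>x. pos_vec x \<Longrightarrow> pos_vec (f x)"
    and fmono: "order_preserving_pos f"
    and fhom: "homogeneous_pos f"
    and Jne: "J \<noteq> {}" and Jproper: "J \<noteq> UNIV"
    and gap: "r0 (face0 f J) < lambdainf (faceinf f (- J))"
  shows "(eigvecs0 (face0 f J) J \<noteq> {} \<and> dH_bounded0 J (eigvecs0 (face0 f J) J)
            \<longrightarrow> (\<forall>I. I \<noteq> {} \<and> I \<subseteq> J \<longrightarrow> r0 (face0 f I) < lambdainf (faceinf f (- I))))
       \<and> (eigvecsinf (faceinf f (- J)) (- J) \<noteq> {}
            \<and> dH_boundedinf (- J) (eigvecsinf (faceinf f (- J)) (- J))
            \<longrightarrow> (\<forall>I. J \<subseteq> I \<and> I \<noteq> UNIV \<longrightarrow> r0 (face0 f I) < lambdainf (faceinf f (- I))))"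
proof -
  interpret order_preserving_homogeneous f using fpos fmono fhom by unfold_locales
  show ?thesis using gap_subface[OF Jproper gap] gap_superface[OF Jne gap] by blast
qed

end
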